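(* Let $(P,\le,A_1\ldots A_k)$ be a regular poset of width $w$ with node tree $(\mathcal{N},\prec)$. Suppose $\mathcal{F}\subseteq\mathcal{N}$ is ancestor-free and for every node $(X,Y,<)\in\mathcal{F}$ a perfect matching $M(X,Y,<)$ of the bipartite graph $(X,Y,<)$ is fixed. Let $F=\bigcup_{(X,Y,<)\in\mathcal{F}}(X\cup Y)$. Then there is a partition of $(F,\le)$ into $w$ chains such that for every node $(X,Y,<)\in\mathcal{F}$ and every edge $(a<b)$ of $M(X,Y,<)$, the elements $a$ and $b$ lie in the same chain of this partition.
   Context: Let $(P,\le)$ be a finite poset of width $w$. For $A\subseteq P$ let $A{\uparrow}=\{y: x\le y\text{ for some }x\in A\}$, $A{\downarrow}=\{y: y\le x\text{ for some }x\in A\}$. For maximal antichains $A,B$ write $A\sqsubseteq B$ if $A\subseteq B{\downarrow}$, and $A\sqsubset B$ if also $A\ne B$. For disjoint antichains $A\sqsubset B$, $(A,B,<)$ is the bipartite graph with classes $A,B$ and edges $(a<b)$ for $a\in A,b\in B$, $a<b$; it is regular if every edge lies in a perfect matching. A regular poset $(P,\le,A_1\ldots A_k)$: $A_1,\dots,A_k$ are maximum antichains partitioning $P$, $(\{A_1,\dots,A_k\},\sqsubseteq)$ is a linear order with minimum $A_1$ and maximum $A_2$, $a<b$ for all $a\in A_1,b\in A_2$, and for every $t\in[2,k]$ and every $A_p\sqsubset A_s$ consecutive in $(\{A_1,\dots,A_t\},\sqsubseteq)$ the graph $(A_p,A_s,<)$ is regular. A node is a bipartite graph $(X,Y,<)$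 where, for some such consecutive pair $A_p\sqsubset A_s$ (at some stage $t$), $X\subseteq A_p$, $Y\subseteq A_s$ and $X\cup Y$ is the vertex set of a connected component of $(A_p,A_s,<)$; $\mathrm{Int}(X,Y,<)=X{\uparrow}\cap Y{\downarrow}$. Node tree $(\mathcal{N},\prec)$: $\mathcal{N}$ is the set of all nodes; when for $t\ge3$ the antichain $A_t$ is inserted between $A_p\sqsubset A_s$ consecutive at stage $t-1$, each node $M$ of $(A_p,A_t,<)$ or $(A_t,A_s,<)$ is a child of the unique node $N$ of $(A_p,A_s,<)$ with $\mathrm{Int}(M)\subset\mathrm{Int}(N)$; this is a rooted tree with root $(A_1,A_2,<)$. A set $\mathcal{F}\subseteq\mathcal{N}$ is ancestor-free if no node of $\mathcal{F}$ is a descendant of another node of $\mathcal{F}$. *)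

theory Defs
  imports Main
begin

definition poset :: "'a set \<Rightarrow> ('a \<Rightarrow> 'a \<Rightarrow> bool) \<Rightarrow> bool" where
  "poset P leq \<longleftrightarrow>
     (\<forall>x\<in>P. leq x x) \<and>
     (\<forall>x\<in>P. \<forall>y\<in>P. leq x y \<and> leq y x \<longrightarrow> x = y) \<and>
     (\<forall>x\<in>P. \<forall>y\<in>P. \<forall>z\<in>P. leq x y \<and> leq y z \<longrightarrow> leq x z)"

definition lt :: "('a \<Rightarrow> 'a \<Rightarrow> bool) \<Rightarrow> 'a \<Rightarrow> 'a \<Rightarrow> bool" where
  "lt leq a b \<longleftrightarrow> leq a b \<and> a \<noteq> b"

definition antichain :: "'a set \<Rightarrow> ('a \<Rightarrow> 'a \<Rightarrow> bool) \<Rightarrow> 'a set \<Rightarrow> bool" where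
  "antichain P leq A \<longleftrightarrow> A \<subseteq> P \<and> (\<forall>x\<in>A. \<forall>y\<in>A. x \<noteq> y \<longrightarrow> \<not> leq x y)"

definition chain :: "'a set \<Rightarrow> ('a \<Rightarrow> 'a \<Rightarrow> bool) \<Rightarrow> 'a set \<Rightarrow> bool" where
  "chain P leq C \<longleftrightarrow> C \<subseteq> P \<and> (\<forall>x\<in>C. \<forall>y\<in>C. leq x y \<or> leq y x)"

definition width :: "'a set \<Rightarrow> ('a \<Rightarrow> 'a \<Rightarrow> bool) \<Rightarrow> nat" where
  "width P leq = Max {card A | A. antichain P leq A}"

definition maximum_antichain :: "'a set \<Rightarrow> ('a \<Rightarrow> 'a \<Rightarrow> bool) \<Rightarrow> 'a set \<Rightarrow> bool" where
  "maximum_antichain P leq A \<longleftrightarrow> antichain P leq A \<and> card A = width P leq"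

definition up_set :: "'a set \<Rightarrow> ('a \<Rightarrow> 'a \<Rightarrow> bool) \<Rightarrow> 'a set \<Rightarrow> 'a set" where
  "up_set P leq A = {y\<in>P. \<exists>x\<in>A. leq x y}"

definition down_set :: "'a set \<Rightarrow> ('a \<Rightarrow> 'a \<Rightarrow> bool) \<Rightarrow> 'a set \<Rightarrow> 'a set" where
  "down_set P leq A = {y\<in>P. \<exists>x\<in>A. leq y x}"

definition sqle :: "'a set \<Rightarrow> ('a \<Rightarrow> 'a \<Rightarrow> bool) \<Rightarrow> 'a set \<Rightarrow> 'a set \<Rightarrow> bool" where
  "sqle P leq A B \<longleftrightarrow> A \<subseteq> down_set P leq B"

definition sqlt :: "'a set \<Rightarrow> ('a \<Rightarrow> 'a \<Rightarrow> bool) \<Rightarrow> 'a set \<Rightarrow> 'a set \<Rightarrow> bool" where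
  "sqlt P leq A B \<longleftrightarrow> sqle P leq A B \<and> A \<noteq> B"

definition perfect_matching ::
  "('a \<Rightarrow> 'a \<Rightarrow> bool) \<Rightarrow> 'a set \<Rightarrow> 'a set \<Rightarrow> ('a \<times> 'a) set \<Rightarrow> bool" where
  "perfect_matching leq X Y M \<longleftrightarrow>
     M \<subseteq> {(a, b). a \<in> X \<and> b \<in> Y \<and> lt leq a b} \<and>
     (\<forall>a\<in>X. \<exists>!b. (a, b) \<in> M) \<and>
     (\<forall>b\<in>Y. \<exists>!a. (a, b) \<in> M)"

definition regular_bip :: "('a \<Rightarrow> 'a \<Rightarrow> bool) \<Rightarrow> 'a set \<Rightarrow> 'a set \<Rightarrow> bool" where
  "regular_bip leq A B \<longleftrightarrow>
     (\<forall>a\<in>A. \<forall>b\<in>B. lt leq a b \<longrightarrow> (\<exists>M. perfect_matching leq A B M \<and> (a, b) \<in> M))"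

definition bip_adj :: "('a \<Rightarrow> 'a \<Rightarrow> bool) \<Rightarrow> 'a set \<Rightarrow> 'a set \<Rightarrow> ('a \<times> 'a) set" where
  "bip_adj leq A B =
     {(u, v). (u \<in> A \<and> v \<in> B \<and> lt leq u v) \<or> (v \<in> A \<and> u \<in> B \<and> lt leq v u)}"

definition bip_component :: "('a \<Rightarrow> 'a \<Rightarrow> bool) \<Rightarrow> 'a set \<Rightarrow> 'a set \<Rightarrow> 'a set \<Rightarrow> bool" where
  "bip_component leq A B C \<longleftrightarrow>
     (\<exists>v \<in> A \<union> B. C = (bip_adj leq A B)\<^sup>* `` {v})"

definition consecutive ::
  "'a set \<Rightarrow> ('a \<Rightarrow> 'a \<Rightarrow> bool) \<Rightarrow> (nat \<Rightarrow> 'a set) \<Rightarrow> nat \<Rightarrow> nat \<Rightarrow> nat \<Rightarrow> bool" where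
  "consecutive P leq A t p s \<longleftrightarrow>
     p \<in> {1..t} \<and> s \<in> {1..t} \<and> sqlt P leq (A p) (A s) \<and>
     \<not> (\<exists>q\<in>{1..t}. sqlt P leq (A p) (A q) \<and> sqlt P leq (A q) (A s))"

definition regular_poset ::
  "'a set \<Rightarrow> ('a \<Rightarrow> 'a \<Rightarrow> bool) \<Rightarrow> (nat \<Rightarrow> 'a set) \<Rightarrow> nat \<Rightarrow> bool" where
  "regular_poset P leq A k \<longleftrightarrow>
     finite P \<and> poset P leq \<and> 2 \<le> k \<and>
     (\<forall>i\<in>{1..k}. maximum_antichain P leq (A i)) \<and>
     (\<forall>i\<in>{1..k}. \<forall>j\<in>{1..k}. i \<noteq> j \<longrightarrow> A i \<inter> A j = {}) \<and>
     (\<Union>i\<in>{1..k}. A i) = P \<and>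
     (\<forall>i\<in>{1..k}. \<forall>j\<in>{1..k}. sqle P leq (A i) (A j) \<or> sqle P leq (A j) (A i)) \<and>
     (\<forall>i\<in>{1..k}. sqle P leq (A 1) (A i) \<and> sqle P leq (A i) (A 2)) \<and>
     (\<forall>a\<in>A 1. \<forall>b\<in>A 2. lt leq a b) \<and>
     (\<forall>t\<in>{2..k}. \<forall>p s. consecutive P leq A t p s \<longrightarrow> regular_bip leq (A p) (A s))"

definition is_node ::
  "'a set \<Rightarrow> ('a \<Rightarrow> 'a \<Rightarrow> bool) \<Rightarrow> (nat \<Rightarrow> 'a set) \<Rightarrow> nat \<Rightarrow> 'a set \<times> 'a set \<Rightarrow> bool" where
  "is_node P leq A k N \<longleftrightarrow>
     (\<exists>t p s. t \<in> {2..k} \<and> consecutive P leq A t p s \<and>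
        fst N \<subseteq> A p \<and> snd N \<subseteq> A s \<and> bip_component leq (A p) (A s) (fst N \<union> snd N))"

definition nodes :: "'a set \<Rightarrow> ('a \<Rightarrow> 'a \<Rightarrow> bool) \<Rightarrow> (nat \<Rightarrow> 'a set) \<Rightarrow> nat \<Rightarrow> ('a set \<times> 'a set) set" where
  "nodes P leq A k = {N. is_node P leq A k N}"

definition node_int :: "'a set \<Rightarrow> ('a \<Rightarrow> 'a \<Rightarrow> bool) \<Rightarrow> 'a set \<times> 'a set \<Rightarrow> 'a set" where
  "node_int P leq N = up_set P leq (fst N) \<inter> down_set P leq (snd N)"

(* child relation of the node tree: (M, N) means M is a child of N *)
definition node_child ::
  "'a set \<Rightarrow> ('a \<Rightarrow> 'a \<Rightarrow> bool) \<Rightarrow> (nat \<Rightarrow> 'a set) \<Rightarrow> nat \<Rightarrow> ('a set \<times> 'a set) rel" where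
  "node_child P leq A k =
     {(M, N). \<exists>t p s. t \<in> {3..k} \<and> consecutive P leq A (t - 1) p s \<and>
        sqlt P leq (A p) (A t) \<and> sqlt P leq (A t) (A s) \<and>
        fst N \<subseteq> A p \<and> snd N \<subseteq> A s \<and> bip_component leq (A p) (A s) (fst N \<union> snd N) \<and>
        ((fst M \<subseteq> A p \<and> snd M \<subseteq> A t \<and> bip_component leq (A p) (A t) (fst M \<union> snd M)) \<or>
         (fst M \<subseteq> A t \<and> snd M \<subseteq> A s \<and> bip_component leq (A t) (A s) (fst M \<union> snd M))) \<and>
        node_int P leq M \<subset> node_int P leq N}"

definition node_descendant ::
  "'a set \<Rightarrow> ('a \<Rightarrow> 'a \<Rightarrow> bool) \<Rightarrow> (nat \<Rightarrow> 'a set) \<Rightarrow> nat \<Rightarrow> 'a set \<times> 'a set \<Rightarrow> 'a set \<times> 'a set \<Rightarrow> bool" where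
  "node_descendant P leq A k M N \<longleftrightarrow> (M, N) \<in> (node_child P leq A k)\<^sup>+"

definition ancestor_free ::
  "'a set \<Rightarrow> ('a \<Rightarrow> 'a \<Rightarrow> bool) \<Rightarrow> (nat \<Rightarrow> 'a set) \<Rightarrow> nat \<Rightarrow> ('a set \<times> 'a set) set \<Rightarrow> bool" where
  "ancestor_free P leq A k \<F> \<longleftrightarrow>
     \<F> \<subseteq> nodes P leq A k \<and>
     (\<forall>M\<in>\<F>. \<forall>N\<in>\<F>. \<not> node_descendant P leq A k M N)"

end

theory Submission
  imports Defs "HOL-Library.Disjoint_Sets"
begin

text \<open>
  Induction on the stage \<open>t\<close>. At stage 2 the only node is \<open>(A\<^sub>1, A\<^sub>2, <)\<close>, and its
  fixed matching splits it into \<open>w\<close> two-element chains. At stage \<open>t \<ge> 3\<close> the layer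
  \<open>A\<^sub>t\<close> is inserted between consecutive layers \<open>A\<^sub>p \<sqsubset> A\<^sub>s\<close>. The fixed matchings of the new
  nodes in \<open>\<F>\<close> extend to perfect matchings of \<open>(A\<^sub>p, A\<^sub>t, <)\<close> and \<open>(A\<^sub>t, A\<^sub>s, <)\<close>,
  whose composite matches \<open>(A\<^sub>p, A\<^sub>s, <)\<close>. Each new node is a child of the node of
  \<open>(A\<^sub>p, A\<^sub>s, <)\<close> through the lower mates of its vertices; replacing the new nodes by
  these parents, matched by the composite, gives an ancestor-free family of stage \<open>t - 1\<close>.
  In the chain partition it has by induction, every \<open>z \<in> A\<^sub>t\<close> joins the chain of its lower
  mate \<open>x\<close>, which also contains the upper end \<open>y\<close> of the composite edge \<open>x < z < y\<close>. An
  element \<open>c\<close> of that chain incomparable with \<open>z\<close> would satisfy \<open>x \<le> c \<le> y\<close> and lie in a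
  layer of stage \<open>t - 1\<close>, none of which is strictly between \<open>A\<^sub>p\<close> and \<open>A\<^sub>s\<close>; so \<open>c\<close> is
  \<open>x\<close> or \<open>y\<close>, both comparable with \<open>z\<close>.
\<close>

subsection \<open>Perfect matchings\<close>

definition mate :: "('a \<times> 'a) set \<Rightarrow> 'a \<Rightarrow> 'a" where
  "mate M a = (THE b. (a, b) \<in> M)"

definition comate :: "('a \<times> 'a) set \<Rightarrow> 'a \<Rightarrow> 'a" where
  "comate M b = (THE a. (a, b) \<in> M)"

lemma perfect_matching_edgeD:
  assumes "perfect_matching leq X Y M" "(a, b) \<in> M"
  shows "a \<in> X" "b \<in> Y" "lt leq a b"
  using assms unfolding perfect_matching_def by blast+

lemma perfect_matching_unique_mate:
  assumes "perfect_matching leq X Y M" "a \<in> X"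
  shows "\<exists>!b. (a, b) \<in> M"
  using assms unfolding perfect_matching_def by blast

lemma perfect_matching_unique_comate:
  assumes "perfect_matching leq X Y M" "b \<in> Y"
  shows "\<exists>!a. (a, b) \<in> M"
  using assms unfolding perfect_matching_def by blast

lemma perfect_matching_mate_eq:
  assumes "perfect_matching leq X Y M" "(a, b) \<in> M"
  shows "mate M a = b"
  unfolding mate_def using perfect_matching_unique_mate[OF assms(1) perfect_matching_edgeD(1)[OF assms]] assms(2)
  by (rule the1_equality)

lemma perfect_matching_comate_eq:
  assumes "perfect_matching leq X Y M" "(a, b) \<in> M"
  shows "comate M b = a"
  unfolding comate_def using perfect_matching_unique_comate[OF assms(1) perfect_matching_edgeD(2)[OF assms]] assms(2)
  by (rule the1_equality)

lemma perfect_matching_mate: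
  assumes "perfect_matching leq X Y M" "a \<in> X"
  shows "(a, mate M a) \<in> M"
  unfolding mate_def using perfect_matching_unique_mate[OF assms] by (rule theI')

lemma perfect_matching_comate:
  assumes "perfect_matching leq X Y M" "b \<in> Y"
  shows "(comate M b, b) \<in> M"
  unfolding comate_def using perfect_matching_unique_comate[OF assms] by (rule theI')

lemma perfect_matching_UN:
  assumes pm: "\<And>i. i \<in> I \<Longrightarrow> perfect_matching leq (X i) (Y i) (M i)"
    and disjX: "disjoint_family_on X I" and disjY: "disjoint_family_on Y I"
  shows "perfect_matching leq (\<Union>i\<in>I. X i) (\<Union>i\<in>I. Y i) (\<Union>i\<in>I. M i)"
  unfolding perfect_matching_def
proof (intro conjI ballI)
  show "(\<Union>i\<in>I. M i) \<subseteq> {(a, b). a \<in> (\<Union>i\<in>I. X i) \<and> b \<in> (\<Union>i\<in>I. Y i) \<and> lt leq a b}"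
    using perfect_matching_edgeD[OF pm] by fast
next
  fix a assume "a \<in> (\<Union>i\<in>I. X i)"
  then obtain i where i: "i \<in> I" "a \<in> X i" by blast
  have "(a, b) \<in> M i" if "j \<in> I" "(a, b) \<in> M j" for j b
  proof -
    have "a \<in> X j" using perfect_matching_edgeD(1)[OF pm[OF that(1)] that(2)] .
    then have "j = i" using disjX that(1) i unfolding disjoint_family_on_def by blast
    then show ?thesis using that(2) by simp
  qed
  moreover obtain b where "(a, b) \<in> M i" "\<And>b'. (a, b') \<in> M i \<Longrightarrow> b' = b"
    using perfect_matching_unique_mate[OF pm[OF i(1)] i(2)] by blast
  ultimately show "\<exists>!b. (a, b) \<in> (\<Union>i\<in>I. M i)"
    using i(1) by (intro ex1I[of _ b]) blast+
next
  fix b assume "b \<in> (\<Union>i\<in>I. Y i)"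
  then obtain i where i: "i \<in> I" "b \<in> Y i" by blast
  have "(a, b) \<in> M i" if "j \<in> I" "(a, b) \<in> M j" for j a
  proof -
    have "b \<in> Y j" using perfect_matching_edgeD(2)[OF pm[OF that(1)] that(2)] .
    then have "j = i" using disjY that(1) i unfolding disjoint_family_on_def by blast
    then show ?thesis using that(2) by simp
  qed
  moreover obtain a where "(a, b) \<in> M i" "\<And>a'. (a', b) \<in> M i \<Longrightarrow> a' = a"
    using perfect_matching_unique_comate[OF pm[OF i(1)] i(2)] by blast
  ultimately show "\<exists>!a. (a, b) \<in> (\<Union>i\<in>I. M i)"
    using i(1) by (intro ex1I[of _ a]) blast+
qed

lemma perfect_matching_Un:
  assumes "perfect_matching leq X1 Y1 M1" "perfect_matching leq X2 Y2 M2"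
    and "X1 \<inter> X2 = {}" "Y1 \<inter> Y2 = {}"
  shows "perfect_matching leq (X1 \<union> X2) (Y1 \<union> Y2) (M1 \<union> M2)"
proof -
  have "perfect_matching leq (\<Union>b. if b then X1 else X2) (\<Union>b. if b then Y1 else Y2)
      (\<Union>b. if b then M1 else M2)"
    using assms by (intro perfect_matching_UN) (auto simp: disjoint_family_on_def)
  then show ?thesis by (simp add: UNIV_bool Un_commute)
qed

lemma perfect_matching_restrict:
  assumes pm: "perfect_matching leq X Y M" and "X' \<subseteq> X" "Y' \<subseteq> Y"
    and closed: "\<And>a b. (a, b) \<in> M \<Longrightarrow> a \<in> X' \<longleftrightarrow> b \<in> Y'"
  shows "perfect_matching leq X' Y' (M \<inter> X' \<times> Y')"
  unfolding perfect_matching_def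
proof (intro conjI ballI)
  show "M \<inter> X' \<times> Y' \<subseteq> {(a, b). a \<in> X' \<and> b \<in> Y' \<and> lt leq a b}"
    using perfect_matching_edgeD(3)[OF pm] by fast
  show "\<exists>!b. (a, b) \<in> M \<inter> X' \<times> Y'" if a: "a \<in> X'" for a
  proof -
    obtain b where "(a, b) \<in> M" "\<And>b'. (a, b') \<in> M \<Longrightarrow> b' = b"
      using perfect_matching_unique_mate[OF pm] a assms(2) by blast
    then show ?thesis using a closed by (intro ex1I[of _ b]) blast+
  qed
  show "\<exists>!a. (a, b) \<in> M \<inter> X' \<times> Y'" if b: "b \<in> Y'" for b
  proof -
    obtain a where "(a, b) \<in> M" "\<And>a'. (a', b) \<in> M \<Longrightarrow> a' = a"
      using perfect_matching_unique_comate[OF pm] b assms(3) by blast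
    then show ?thesis using b closed by (intro ex1I[of _ a]) blast+
  qed
qed

lemma perfect_matching_relcomp:
  assumes pm1: "perfect_matching leq X Z M1" and pm2: "perfect_matching leq Z Y M2"
    and trans: "\<And>x z y. x \<in> X \<Longrightarrow> z \<in> Z \<Longrightarrow> y \<in> Y \<Longrightarrow> lt leq x z \<Longrightarrow> lt leq z y \<Longrightarrow> lt leq x y"
  shows "perfect_matching leq X Y (M1 O M2)"
  unfolding perfect_matching_def
proof (intro conjI ballI)
  show "M1 O M2 \<subseteq> {(a, b). a \<in> X \<and> b \<in> Y \<and> lt leq a b}"
    using perfect_matching_edgeD[OF pm1] perfect_matching_edgeD[OF pm2] trans by blast
  show "\<exists>!b. (a, b) \<in> M1 O M2" if a: "a \<in> X" for a
  proof -
    obtain z where z: "(a, z) \<in> M1" "\<And>z'. (a, z') \<in> M1 \<Longrightarrow> z' = z"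
      using perfect_matching_unique_mate[OF pm1 a] by blast
    obtain b where b: "(z, b) \<in> M2" "\<And>b'. (z, b') \<in> M2 \<Longrightarrow> b' = b"
      using perfect_matching_unique_mate[OF pm2 perfect_matching_edgeD(2)[OF pm1 z(1)]] by blast
    show ?thesis using z b by (intro ex1I[of _ b]) blast+
  qed
  show "\<exists>!a. (a, b) \<in> M1 O M2" if b: "b \<in> Y" for b
  proof -
    obtain z where z: "(z, b) \<in> M2" "\<And>z'. (z', b) \<in> M2 \<Longrightarrow> z' = z"
      using perfect_matching_unique_comate[OF pm2 b] by blast
    obtain a where a: "(a, z) \<in> M1" "\<And>a'. (a', z) \<in> M1 \<Longrightarrow> a' = a"
      using perfect_matching_unique_comate[OF pm1 perfect_matching_edgeD(1)[OF pm2 z(1)]] by blast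
    show ?thesis using z a by (intro ex1I[of _ a]) blast+
  qed
qed

subsection \<open>Components of bipartite comparability graphs\<close>

lemma sym_bip_adj: "sym (bip_adj leq X Y)"
  unfolding bip_adj_def sym_def by auto

lemma bip_component_eq:
  assumes "bip_component leq X Y C" "u \<in> C"
  shows "C = (bip_adj leq X Y)\<^sup>* `` {u}"
proof -
  obtain v where v: "C = (bip_adj leq X Y)\<^sup>* `` {v}"
    using assms(1) unfolding bip_component_def by blast
  have vu: "(v, u) \<in> (bip_adj leq X Y)\<^sup>*" using assms(2) v by simp
  then have "(u, v) \<in> (bip_adj leq X Y)\<^sup>*" by (rule symD[OF sym_rtrancl[OF sym_bip_adj]])
  with vu show ?thesis
    using v rtrancl_trans[of v u] rtrancl_trans[of u v] by blast
qed

lemma bip_component_rtrancl: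
  assumes "bip_component leq X Y C" "u \<in> C" "(u, v) \<in> (bip_adj leq X Y)\<^sup>*"
  shows "v \<in> C"
  using bip_component_eq[OF assms(1,2)] assms(3) by simp

lemma bip_component_edge_iff:
  assumes "bip_component leq X Y C" "a \<in> X" "b \<in> Y" "lt leq a b"
  shows "a \<in> C \<longleftrightarrow> b \<in> C"
proof -
  have "(a, b) \<in> bip_adj leq X Y" "(b, a) \<in> bip_adj leq X Y"
    using assms(2-4) unfolding bip_adj_def by auto
  then show ?thesis using bip_component_rtrancl[OF assms(1) _ r_into_rtrancl] by blast
qed

lemma bip_component_subset:
  assumes "bip_component leq X Y C"
  shows "C \<subseteq> X \<union> Y"
proof
  fix u assume "u \<in> C"
  obtain v where v: "v \<in> X \<union> Y" "C = (bip_adj leq X Y)\<^sup>* `` {v}"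
    using assms unfolding bip_component_def by blast
  have "(v, u) \<in> (bip_adj leq X Y)\<^sup>*" using \<open>u \<in> C\<close> v(2) by simp
  then show "u \<in> X \<union> Y"
    using v(1) by (induction rule: rtrancl_induct) (auto simp: bip_adj_def)
qed

lemma bip_component_of:
  "v \<in> X \<union> Y \<Longrightarrow> bip_component leq X Y ((bip_adj leq X Y)\<^sup>* `` {v})"
  unfolding bip_component_def by blast

lemma bip_components_disjoint:
  assumes "bip_component leq X Y C" "bip_component leq X Y C'" "C \<noteq> C'"
  shows "C \<inter> C' = {}"
  using bip_component_eq[OF assms(1)] bip_component_eq[OF assms(2)] assms(3) by blast

definition bip_node :: "('a \<Rightarrow> 'a \<Rightarrow> bool) \<Rightarrow> 'a set \<Rightarrow> 'a set \<Rightarrow> 'a set \<times> 'a set \<Rightarrow> bool" where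
  "bip_node leq X Y G \<longleftrightarrow>
     fst G \<subseteq> X \<and> snd G \<subseteq> Y \<and> bip_component leq X Y (fst G \<union> snd G)"

lemma bip_nodes_disjoint:
  assumes "bip_node leq X Y G" "bip_node leq X Y G'" "X \<inter> Y = {}" "G \<noteq> G'"
  shows "fst G \<inter> fst G' = {}" "snd G \<inter> snd G' = {}"
proof -
  have "fst G \<union> snd G \<noteq> fst G' \<union> snd G'"
  proof
    assume "fst G \<union> snd G = fst G' \<union> snd G'"
    then have "fst G = fst G'" "snd G = snd G'"
      using assms(1-3) unfolding bip_node_def by blast+
    then show False using assms(4) by (simp add: prod_eq_iff)
  qed
  then have "(fst G \<union> snd G) \<inter> (fst G' \<union> snd G') = {}"
    using bip_components_disjoint assms(1,2) unfolding bip_node_def by blast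
  then show "fst G \<inter> fst G' = {}" "snd G \<inter> snd G' = {}" by blast+
qed

lemma bip_node_edge_iff:
  assumes G: "bip_node leq X Y G" and XY: "X \<inter> Y = {}" and e: "a \<in> X" "b \<in> Y" "lt leq a b"
  shows "a \<in> fst G \<longleftrightarrow> b \<in> snd G"
proof -
  have sides: "fst G \<subseteq> X" "snd G \<subseteq> Y" and comp: "bip_component leq X Y (fst G \<union> snd G)"
    using G unfolding bip_node_def by auto
  have "a \<in> fst G \<longleftrightarrow> a \<in> fst G \<union> snd G" "b \<in> snd G \<longleftrightarrow> b \<in> fst G \<union> snd G"
    using sides XY e(1,2) by auto
  with bip_component_edge_iff[OF comp e] show ?thesis by blast
qed

lemma bip_node_complete:
  assumes N: "bip_node leq X Y N" and XY: "X \<inter> Y = {}" "X \<noteq> {}" "Y \<noteq> {}"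
    and complete: "\<And>a b. a \<in> X \<Longrightarrow> b \<in> Y \<Longrightarrow> lt leq a b"
  shows "N = (X, Y)"
proof -
  have comp: "bip_component leq X Y (fst N \<union> snd N)" using N unfolding bip_node_def by blast
  obtain v where v: "v \<in> X \<union> Y" "v \<in> fst N \<union> snd N"
    using comp unfolding bip_component_def by blast
  have iff: "a \<in> fst N \<union> snd N \<longleftrightarrow> b \<in> fst N \<union> snd N" if "a \<in> X" "b \<in> Y" for a b
    using bip_component_edge_iff[OF comp that complete[OF that]] .
  have "X \<union> Y \<subseteq> fst N \<union> snd N"
  proof (cases "v \<in> X")
    case True
    then show ?thesis using iff[OF True] iff v(2) XY(2,3) by blast
  next
    case False
    then have "v \<in> Y" using v(1) by blast
    then show ?thesis using iff[OF _ \<open>v \<in> Y\<close>] iff v(2) XY(2,3) by blast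
  qed
  then have "fst N = X" "snd N = Y" using N XY(1) unfolding bip_node_def by blast+
  then show ?thesis by (simp add: prod_eq_iff)
qed

lemma perfect_matching_extend_nodes:
  assumes pm: "perfect_matching leq X Y M0" and XY: "X \<inter> Y = {}"
    and nodes: "\<And>G. G \<in> S \<Longrightarrow> bip_node leq X Y G"
    and pms: "\<And>G. G \<in> S \<Longrightarrow> perfect_matching leq (fst G) (snd G) (M G)"
  shows "\<exists>M'. perfect_matching leq X Y M' \<and> (\<forall>G\<in>S. M G \<subseteq> M')"
proof (intro exI conjI ballI)
  let ?X = "\<Union>G\<in>S. fst G" and ?Y = "\<Union>G\<in>S. snd G"
  have sub: "?X \<subseteq> X" "?Y \<subseteq> Y" using nodes unfolding bip_node_def by blast+
  have closed: "a \<in> X - ?X \<longleftrightarrow> b \<in> Y - ?Y" if "(a, b) \<in> M0" for a b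
  proof -
    have "a \<in> fst G \<longleftrightarrow> b \<in> snd G" if "G \<in> S" for G
      using bip_node_edge_iff[OF nodes[OF that] XY perfect_matching_edgeD[OF pm \<open>(a, b) \<in> M0\<close>]] .
    then show ?thesis using perfect_matching_edgeD(1,2)[OF pm that] by blast
  qed
  have rest: "perfect_matching leq (X - ?X) (Y - ?Y) (M0 \<inter> (X - ?X) \<times> (Y - ?Y))"
    by (rule perfect_matching_restrict[OF pm _ _ closed]) blast+
  have inner: "perfect_matching leq ?X ?Y (\<Union>G\<in>S. M G)"
  proof (rule perfect_matching_UN)
    show "disjoint_family_on fst S" "disjoint_family_on snd S"
      using bip_nodes_disjoint[OF nodes nodes XY] unfolding disjoint_family_on_def by blast+
  qed (fact pms)
  have "perfect_matching leq (?X \<union> (X - ?X)) (?Y \<union> (Y - ?Y))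
      ((\<Union>G\<in>S. M G) \<union> M0 \<inter> (X - ?X) \<times> (Y - ?Y))"
    by (rule perfect_matching_Un[OF inner rest]) blast+
  then show "perfect_matching leq X Y ((\<Union>G\<in>S. M G) \<union> M0 \<inter> (X - ?X) \<times> (Y - ?Y))"
    using sub by (simp add: Un_absorb1)
qed (rule le_supI1, rule UN_upper)

subsection \<open>Node intervals and matched chain partitions\<close>

lemma node_int_subset:
  assumes "poset P leq" "fst N \<union> snd N \<subseteq> P" and "fst G \<union> snd G \<subseteq> node_int P leq N"
  shows "node_int P leq G \<subseteq> node_int P leq N"
proof
  fix u assume "u \<in> node_int P leq G"
  then obtain g h where u: "u \<in> P" "g \<in> fst G" "leq g u" "h \<in> snd G" "leq u h"
    unfolding node_int_def up_set_def down_set_def by blast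
  then obtain g' h' where "g' \<in> fst N" "leq g' g" "g \<in> P" "h' \<in> snd N" "leq h h'" "h \<in> P"
    using assms(3) unfolding node_int_def up_set_def down_set_def by blast
  moreover have "g' \<in> P" "h' \<in> P" using calculation assms(2) by auto
  ultimately have "leq g' u" "leq u h'" "g' \<in> fst N" "h' \<in> snd N"
    using assms(1) u unfolding poset_def by meson+
  then show "u \<in> node_int P leq N"
    using u(1) unfolding node_int_def up_set_def down_set_def by blast
qed

lemma node_intI:
  "u \<in> P \<Longrightarrow> g \<in> fst N \<Longrightarrow> leq g u \<Longrightarrow> h \<in> snd N \<Longrightarrow> leq u h \<Longrightarrow> u \<in> node_int P leq N"
  unfolding node_int_def up_set_def down_set_def by blast

definition node_vertices :: "('a set \<times> 'a set) set \<Rightarrow> 'a set" where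
  "node_vertices F = (\<Union>N\<in>F. fst N \<union> snd N)"

definition matched_chain_partition ::
  "'a set \<Rightarrow> ('a \<Rightarrow> 'a \<Rightarrow> bool) \<Rightarrow> nat \<Rightarrow> ('a set \<times> 'a set) set \<Rightarrow>
    ('a set \<times> 'a set \<Rightarrow> ('a \<times> 'a) set) \<Rightarrow> (nat \<Rightarrow> 'a set) \<Rightarrow> bool" where
  "matched_chain_partition P leq w F M C \<longleftrightarrow>
     (\<forall>i<w. chain P leq (C i)) \<and>
     (\<forall>i<w. \<forall>j<w. i \<noteq> j \<longrightarrow> C i \<inter> C j = {}) \<and>
     (\<Union>i<w. C i) = node_vertices F \<and>
     (\<forall>N\<in>F. \<forall>(a, b)\<in>M N. \<exists>i<w. a \<in> C i \<and> b \<in> C i)"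

lemma matched_chain_partition_empty: "matched_chain_partition P leq w {} M (\<lambda>_. {})"
  unfolding matched_chain_partition_def node_vertices_def chain_def by simp

lemma perfect_matching_pairs_partition:
  assumes pm: "perfect_matching leq X Y M" and XY: "X \<inter> Y = {}" and f: "bij_betw f I X"
  shows "disjoint_family_on (\<lambda>i. {f i, mate M (f i)}) I"
    and "(\<Union>i\<in>I. {f i, mate M (f i)}) = X \<union> Y"
proof -
  have fX: "f i \<in> X" if "i \<in> I" for i using f that by (auto dest: bij_betwE)
  have edge: "(f i, mate M (f i)) \<in> M" if "i \<in> I" for i
    using perfect_matching_mate[OF pm fX[OF that]] .
  have mate_Y: "mate M (f i) \<in> Y" if "i \<in> I" for i
    using perfect_matching_edgeD(2)[OF pm edge[OF that]] .
  show "disjoint_family_on (\<lambda>i. {f i, mate M (f i)}) I"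
    unfolding disjoint_family_on_def
  proof (intro ballI impI)
    fix i j assume ij: "i \<in> I" "j \<in> I" "i \<noteq> j"
    then have "f i \<noteq> f j" using f by (auto dest: bij_betw_imp_inj_on simp: inj_on_def)
    moreover have "mate M (f i) \<noteq> mate M (f j)"
      using perfect_matching_comate_eq[OF pm edge[OF ij(1)]] perfect_matching_comate_eq[OF pm edge[OF ij(2)]]
        \<open>f i \<noteq> f j\<close> by auto
    moreover have "f i \<noteq> mate M (f j)" "f j \<noteq> mate M (f i)"
      using fX[OF ij(1)] fX[OF ij(2)] mate_Y[OF ij(1)] mate_Y[OF ij(2)] XY by auto
    ultimately show "{f i, mate M (f i)} \<inter> {f j, mate M (f j)} = {}" by auto
  qed
  have "x \<in> (\<Union>i\<in>I. {f i, mate M (f i)})" if "x \<in> X" for x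
    using f that by (auto simp: bij_betw_def)
  moreover have "y \<in> (\<Union>i\<in>I. {f i, mate M (f i)})" if "y \<in> Y" for y
  proof -
    have e: "(comate M y, y) \<in> M" using perfect_matching_comate[OF pm that] .
    then have "comate M y \<in> X" using perfect_matching_edgeD(1)[OF pm] by blast
    then obtain i where "i \<in> I" "f i = comate M y" using f by (auto simp: bij_betw_def)
    then have "i \<in> I" "y = mate M (f i)" using perfect_matching_mate_eq[OF pm e] by simp_all
    then show ?thesis by blast
  qed
  ultimately show "(\<Union>i\<in>I. {f i, mate M (f i)}) = X \<union> Y" using fX mate_Y by blast
qed

lemma matched_chain_partition_single:
  assumes pm: "perfect_matching leq X Y (M (X, Y))" and X: "finite X" "card X = w"
    and XY: "X \<inter> Y = {}" "X \<union> Y \<subseteq> P" and refl: "\<And>x. x \<in> P \<Longrightarrow> leq x x"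
  shows "\<exists>C. matched_chain_partition P leq w {(X, Y)} M C"
proof -
  let ?M = "M (X, Y)"
  obtain f where f: "bij_betw f {..<w} X"
    using ex_bij_betw_nat_finite[OF X(1)] X(2) lessThan_atLeast0 by metis
  define C where "C i = {f i, mate ?M (f i)}" for i
  have edge: "(f i, mate ?M (f i)) \<in> ?M" if "i < w" for i
    using perfect_matching_mate[OF pm] f that by (auto dest: bij_betwE)
  note part = perfect_matching_pairs_partition[OF pm XY(1) f]
  have "matched_chain_partition P leq w {(X, Y)} M C"
    unfolding matched_chain_partition_def
  proof (intro conjI allI impI ballI)
    fix i assume "i < w"
    then show "chain P leq (C i)"
      using perfect_matching_edgeD[OF pm edge] XY(2) refl unfolding C_def chain_def lt_def by blast
  next
    show "C i \<inter> C j = {}" if "i < w" "j < w" "i \<noteq> j" for i j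
      using part(1) that unfolding disjoint_family_on_def C_def by simp
    show "(\<Union>i<w. C i) = node_vertices {(X, Y)}"
      using part(2) unfolding C_def node_vertices_def by simp
  next
    fix N e assume "N \<in> {(X, Y)}" "e \<in> M N"
    then obtain a b where "e = (a, b)" "(a, b) \<in> ?M" by (cases e) auto
    moreover then obtain i where "i < w" "a = f i"
      using f perfect_matching_edgeD(1)[OF pm] by (auto simp: bij_betw_def)
    ultimately show "case e of (a, b) \<Rightarrow> \<exists>i<w. a \<in> C i \<and> b \<in> C i"
      using perfect_matching_mate_eq[OF pm] unfolding C_def by auto
  qed
  then show ?thesis by blast
qed

subsection \<open>Regular posets\<close>

lemma regular_poset_width_pos:
  assumes reg: "regular_poset P leq A k" and c: "consecutive P leq A t p s" "t \<le> k"
  shows "0 < width P leq"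
proof (rule ccontr)
  assume "\<not> 0 < width P leq"
  have ps: "p \<in> {1..k}" "s \<in> {1..k}" "A p \<noteq> A s"
    using c unfolding consecutive_def sqlt_def by auto
  have "A i = {}" if "i \<in> {1..k}" for i
  proof -
    have "maximum_antichain P leq (A i)" using reg that unfolding regular_poset_def by blast
    moreover have "finite P" using reg unfolding regular_poset_def by blast
    ultimately show ?thesis using \<open>\<not> 0 < width P leq\<close> finite_subset
      unfolding maximum_antichain_def antichain_def by fastforce
  qed
  then show False using ps by simp
qed

locale regular_layers =
  fixes P :: "'a set" and leq :: "'a \<Rightarrow> 'a \<Rightarrow> bool" and A :: "nat \<Rightarrow> 'a set" and k :: nat
  assumes regular: "regular_poset P leq A k" and width_pos: "0 < width P leq"
begin

lemma finite_P: "finite P" and two_le_k: "2 \<le> k"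
  using regular unfolding regular_poset_def by blast+

lemma leq_refl: "x \<in> P \<Longrightarrow> leq x x"
  and leq_antisym: "x \<in> P \<Longrightarrow> y \<in> P \<Longrightarrow> leq x y \<Longrightarrow> leq y x \<Longrightarrow> x = y"
  and leq_trans: "x \<in> P \<Longrightarrow> y \<in> P \<Longrightarrow> z \<in> P \<Longrightarrow> leq x y \<Longrightarrow> leq y z \<Longrightarrow> leq x z"
  using regular unfolding regular_poset_def poset_def by blast+

lemma lt_trans: "x \<in> P \<Longrightarrow> y \<in> P \<Longrightarrow> z \<in> P \<Longrightarrow> lt leq x y \<Longrightarrow> lt leq y z \<Longrightarrow> lt leq x z"
  unfolding lt_def using leq_trans leq_antisym by metis

lemma layer_maximum_antichain: "i \<in> {1..k} \<Longrightarrow> maximum_antichain P leq (A i)"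
  using regular unfolding regular_poset_def by blast

lemma layer_subset: "i \<in> {1..k} \<Longrightarrow> A i \<subseteq> P"
  using layer_maximum_antichain unfolding maximum_antichain_def antichain_def by blast

lemma layer_antichain: "i \<in> {1..k} \<Longrightarrow> x \<in> A i \<Longrightarrow> y \<in> A i \<Longrightarrow> leq x y \<Longrightarrow> x = y"
  using layer_maximum_antichain unfolding maximum_antichain_def antichain_def by blast

lemma card_layer: "i \<in> {1..k} \<Longrightarrow> card (A i) = width P leq"
  using layer_maximum_antichain unfolding maximum_antichain_def by blast

lemma finite_layer: "i \<in> {1..k} \<Longrightarrow> finite (A i)"
  using layer_subset finite_P finite_subset by blast

lemma layer_nonempty: "i \<in> {1..k} \<Longrightarrow> A i \<noteq> {}"
  using card_layer width_pos by fastforce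

lemma layers_disjoint: "i \<in> {1..k} \<Longrightarrow> j \<in> {1..k} \<Longrightarrow> i \<noteq> j \<Longrightarrow> A i \<inter> A j = {}"
  using regular unfolding regular_poset_def by blast

lemma layer_unique: "i \<in> {1..k} \<Longrightarrow> j \<in> {1..k} \<Longrightarrow> x \<in> A i \<Longrightarrow> x \<in> A j \<Longrightarrow> i = j"
  using layers_disjoint by blast

lemma layer_inj: "i \<in> {1..k} \<Longrightarrow> j \<in> {1..k} \<Longrightarrow> A i = A j \<Longrightarrow> i = j"
  using layers_disjoint layer_nonempty by fastforce

lemma one_in_range: "(1::nat) \<in> {1..k}" and two_in_range: "(2::nat) \<in> {1..k}"
  using two_le_k by simp_all

lemma sqle_layers_linear: "i \<in> {1..k} \<Longrightarrow> j \<in> {1..k} \<Longrightarrow> sqle P leq (A i) (A j) \<or> sqle P leq (A j) (A i)"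
  and sqle_first_layer: "i \<in> {1..k} \<Longrightarrow> sqle P leq (A 1) (A i)"
  and sqle_last_layer: "i \<in> {1..k} \<Longrightarrow> sqle P leq (A i) (A 2)"
  and first_below_last: "a \<in> A 1 \<Longrightarrow> b \<in> A 2 \<Longrightarrow> lt leq a b"
  and regular_consecutive: "t \<in> {2..k} \<Longrightarrow> consecutive P leq A t p s \<Longrightarrow> regular_bip leq (A p) (A s)"
  using regular unfolding regular_poset_def by blast+

lemma sqle_layer_iff:
  "i \<in> {1..k} \<Longrightarrow> sqle P leq (A i) (A j) \<longleftrightarrow> (\<forall>x\<in>A i. \<exists>y\<in>A j. leq x y)"
  using layer_subset unfolding sqle_def down_set_def by blast

lemma sqle_layer_trans:
  assumes "i \<in> {1..k}" "j \<in> {1..k}" "l \<in> {1..k}"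
    and "sqle P leq (A i) (A j)" "sqle P leq (A j) (A l)"
  shows "sqle P leq (A i) (A l)"
  unfolding sqle_layer_iff[OF assms(1)]
proof
  fix x assume x: "x \<in> A i"
  obtain y where y: "y \<in> A j" "leq x y" using assms(4) x sqle_layer_iff[OF assms(1)] by blast
  obtain z where z: "z \<in> A l" "leq y z" using assms(5) y sqle_layer_iff[OF assms(2)] by blast
  have "leq x z" using leq_trans x y z layer_subset assms(1-3) by blast
  then show "\<exists>z\<in>A l. leq x z" using z by blast
qed

lemma leq_round_trip_layer:
  assumes ij: "i \<in> {1..k}" "j \<in> {1..k}"
    and "x \<in> A i" "y \<in> A j" "x' \<in> A i" "leq x y" "leq y x'"
  shows "i = j"
proof -
  have P: "x \<in> P" "y \<in> P" "x' \<in> P" using layer_subset ij assms(3-5) by blast+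
  have "x = x'" using layer_antichain[OF ij(1) assms(3,5)] leq_trans[OF P] assms(6,7) by simp
  then have "x = y" using leq_antisym[OF P(1,2)] assms(6,7) by simp
  then show ?thesis using layer_unique ij assms(3,4) by simp
qed

lemma sqle_layer_antisym:
  assumes ij: "i \<in> {1..k}" "j \<in> {1..k}" and "sqle P leq (A i) (A j)" "sqle P leq (A j) (A i)"
  shows "i = j"
proof -
  obtain x where x: "x \<in> A i" using layer_nonempty[OF ij(1)] by blast
  obtain y where y: "y \<in> A j" "leq x y" using assms(3) x sqle_layer_iff[OF ij(1)] by blast
  obtain x' where x': "x' \<in> A i" "leq y x'" using assms(4) y sqle_layer_iff[OF ij(2)] by blast
  show ?thesis using leq_round_trip_layer[OF ij x y(1) x'(1) y(2) x'(2)] .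
qed

lemma sqlt_layer_iff:
  "i \<in> {1..k} \<Longrightarrow> j \<in> {1..k} \<Longrightarrow> sqlt P leq (A i) (A j) \<longleftrightarrow> sqle P leq (A i) (A j) \<and> i \<noteq> j"
  unfolding sqlt_def using layer_inj by blast

lemma sqlt_layer_trans:
  assumes "i \<in> {1..k}" "j \<in> {1..k}" "l \<in> {1..k}"
    and "sqlt P leq (A i) (A j)" "sqlt P leq (A j) (A l)"
  shows "sqlt P leq (A i) (A l)"
  using assms sqle_layer_trans sqle_layer_antisym sqlt_layer_iff by metis

lemma sqlt_layers_linear:
  "i \<in> {1..k} \<Longrightarrow> j \<in> {1..k} \<Longrightarrow> i \<noteq> j \<Longrightarrow> sqlt P leq (A i) (A j) \<or> sqlt P leq (A j) (A i)"
  using sqle_layers_linear sqlt_layer_iff by metis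

lemma sqlt_layer_asym:
  "i \<in> {1..k} \<Longrightarrow> j \<in> {1..k} \<Longrightarrow> sqlt P leq (A i) (A j) \<Longrightarrow> \<not> sqlt P leq (A j) (A i)"
  using sqlt_layer_iff sqle_layer_antisym by metis

lemma leq_layers_sqlt:
  assumes ij: "i \<in> {1..k}" "j \<in> {1..k}" and xy: "x \<in> A i" "y \<in> A j" "leq x y" and "i \<noteq> j"
  shows "sqlt P leq (A i) (A j)"
proof (rule ccontr)
  assume "\<not> sqlt P leq (A i) (A j)"
  then have "sqlt P leq (A j) (A i)" using sqlt_layers_linear ij \<open>i \<noteq> j\<close> by blast
  then have "\<forall>y\<in>A j. \<exists>x'\<in>A i. leq y x'" using sqle_layer_iff[OF ij(2)] unfolding sqlt_def by blast
  then obtain x' where x': "x' \<in> A i" "leq y x'" using xy(2) by blast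
  show False using leq_round_trip_layer[OF ij xy(1,2) x'(1) xy(3) x'(2)] \<open>i \<noteq> j\<close> by simp
qed

lemma consecutiveD:
  assumes "consecutive P leq A t p s" "t \<le> k"
  shows "p \<in> {1..t}" "s \<in> {1..t}" "p \<in> {1..k}" "s \<in> {1..k}" "sqlt P leq (A p) (A s)" "p \<noteq> s"
  using assms unfolding consecutive_def sqlt_def by auto

lemma consecutive_perfect_matching:
  assumes "t \<in> {2..k}" "consecutive P leq A t p s"
  obtains M where "perfect_matching leq (A p) (A s) M"
proof -
  have ps: "p \<in> {1..k}" "s \<in> {1..k}" "sqlt P leq (A p) (A s)" "p \<noteq> s"
    using consecutiveD assms by auto
  obtain a where a: "a \<in> A p" using layer_nonempty[OF ps(1)] by blast
  have "\<forall>a\<in>A p. \<exists>b\<in>A s. leq a b" using ps(3) sqle_layer_iff[OF ps(1)] unfolding sqlt_def by blast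
  then obtain b where b: "b \<in> A s" "leq a b" using a by blast
  have "a \<noteq> b" using layer_unique[OF ps(1,2)] ps(4) a b(1) by auto
  then have "lt leq a b" using b unfolding lt_def by blast
  then show ?thesis
    using that regular_consecutive[OF assms] a b unfolding regular_bip_def by blast
qed

lemma consecutive_matching_extending:
  assumes "t \<in> {2..k}" "consecutive P leq A t p s"
    and matched: "\<And>G. G \<in> F \<Longrightarrow> perfect_matching leq (fst G) (snd G) (M G)"
  shows "\<exists>M'. perfect_matching leq (A p) (A s) M' \<and>
    (\<forall>G\<in>F. bip_node leq (A p) (A s) G \<longrightarrow> M G \<subseteq> M')"
proof -
  obtain M0 where M0: "perfect_matching leq (A p) (A s) M0"
    using consecutive_perfect_matching[OF assms(1,2)] .
  have ps: "A p \<inter> A s = {}" using consecutiveD[OF assms(2)] assms(1) layers_disjoint by auto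
  let ?S = "{G \<in> F. bip_node leq (A p) (A s) G}"
  have "\<And>G. G \<in> ?S \<Longrightarrow> bip_node leq (A p) (A s) G"
    and "\<And>G. G \<in> ?S \<Longrightarrow> perfect_matching leq (fst G) (snd G) (M G)"
    using matched by simp_all
  then have "\<exists>M'. perfect_matching leq (A p) (A s) M' \<and> (\<forall>G\<in>?S. M G \<subseteq> M')"
    by (rule perfect_matching_extend_nodes[OF M0 ps])
  then obtain M' where M': "perfect_matching leq (A p) (A s) M'" "\<forall>G\<in>?S. M G \<subseteq> M'"
    by blast
  show ?thesis
  proof (intro exI conjI ballI impI)
    fix G assume "G \<in> F" "bip_node leq (A p) (A s) G"
    then show "M G \<subseteq> M'" using M'(2) by blast
  qed (fact M'(1))
qed

lemma card_down_set_strict_mono: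
  assumes ij: "i \<in> {1..k}" "j \<in> {1..k}" and "sqlt P leq (A i) (A j)"
  shows "card (down_set P leq (A i)) < card (down_set P leq (A j))"
proof (rule psubset_card_mono)
  show "finite (down_set P leq (A j))" using finite_P unfolding down_set_def by simp
  have ij_le: "sqle P leq (A i) (A j)" and "i \<noteq> j" using assms sqlt_layer_iff by blast+
  have "down_set P leq (A i) \<subseteq> down_set P leq (A j)"
  proof
    fix x assume "x \<in> down_set P leq (A i)"
    then obtain y where xy: "x \<in> P" "y \<in> A i" "leq x y" unfolding down_set_def by blast
    then obtain z where z: "z \<in> A j" "leq y z" using ij_le sqle_layer_iff[OF ij(1)] by blast
    have "leq x z" using leq_trans[OF xy(1) _ _ xy(3) z(2)] xy(2) z(1) layer_subset ij by blast
    then show "x \<in> down_set P leq (A j)" using xy(1) z(1) unfolding down_set_def by blast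
  qed
  moreover have "\<not> A j \<subseteq> down_set P leq (A i)"
  proof
    assume "A j \<subseteq> down_set P leq (A i)"
    then have "sqle P leq (A j) (A i)" unfolding sqle_def .
    then show False using sqle_layer_antisym[OF ij ij_le] \<open>i \<noteq> j\<close> by simp
  qed
  moreover have "A j \<subseteq> down_set P leq (A j)"
    using layer_subset[OF ij(2)] leq_refl unfolding down_set_def by blast
  ultimately show "down_set P leq (A i) \<subset> down_set P leq (A j)" by blast
qed

lemma insertion_point:
  assumes t: "t \<in> {3..k}"
  obtains p s where "consecutive P leq A (t - 1) p s"
    "sqlt P leq (A p) (A t)" "sqlt P leq (A t) (A s)"
proof -
  \<comment> \<open>The size of the down-set is strictly monotone along \<open>\<sqsubset>\<close>, so it picks out the
    nearest layers below and above \<open>A t\<close>.\<close>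
  let ?d = "\<lambda>i. card (down_set P leq (A i))"
  define L where "L = {i \<in> {1..t - 1}. sqlt P leq (A i) (A t)}"
  define R where "R = {i \<in> {1..t - 1}. sqlt P leq (A t) (A i)}"
  have tk: "t \<in> {1..k}" using t by simp
  have "1 \<in> L" "2 \<in> R"
    using t sqle_first_layer[OF tk] sqle_last_layer[OF tk]
      sqlt_layer_iff[OF one_in_range tk] sqlt_layer_iff[OF tk two_in_range]
    unfolding L_def R_def by auto
  moreover have "finite L" "finite R" unfolding L_def R_def by simp_all
  ultimately have "Max (?d ` L) \<in> ?d ` L" "Min (?d ` R) \<in> ?d ` R"
    by (auto intro: Max_in Min_in)
  then obtain p s where p: "Max (?d ` L) = ?d p" "p \<in> L" and s: "Min (?d ` R) = ?d s" "s \<in> R"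
    by (elim imageE)
  have pk: "p \<in> {1..k}" and sk: "s \<in> {1..k}" and pt: "sqlt P leq (A p) (A t)"
    and ts: "sqlt P leq (A t) (A s)"
    using p(2) s(2) t unfolding L_def R_def by auto
  have "consecutive P leq A (t - 1) p s"
    unfolding consecutive_def
  proof (intro conjI)
    show "p \<in> {1..t - 1}" "s \<in> {1..t - 1}" using p(2) s(2) unfolding L_def R_def by auto
    show "sqlt P leq (A p) (A s)" using sqlt_layer_trans[OF pk tk sk pt ts] .
    show "\<not> (\<exists>q\<in>{1..t - 1}. sqlt P leq (A p) (A q) \<and> sqlt P leq (A q) (A s))"
    proof
      assume "\<exists>q\<in>{1..t - 1}. sqlt P leq (A p) (A q) \<and> sqlt P leq (A q) (A s)"
      then obtain q where q: "q \<in> {1..t - 1}" "sqlt P leq (A p) (A q)" "sqlt P leq (A q) (A s)"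
        by blast
      have qk: "q \<in> {1..k}" "q \<noteq> t" using q(1) t by auto
      have "?d p < ?d q" "?d q < ?d s"
        using card_down_set_strict_mono[OF pk qk(1) q(2)] card_down_set_strict_mono[OF qk(1) sk q(3)] .
      moreover have "?d q \<le> ?d p" if "q \<in> L"
        unfolding p(1)[symmetric] using \<open>finite L\<close> that by (intro Max_ge) auto
      moreover have "?d s \<le> ?d q" if "q \<in> R"
        unfolding s(1)[symmetric] using \<open>finite R\<close> that by (intro Min_le) auto
      moreover have "q \<in> L \<or> q \<in> R"
        using sqlt_layers_linear[OF qk(1) tk qk(2)] q(1) unfolding L_def R_def by blast
      ultimately show False by linarith
    qed
  qed
  then show ?thesis using that pt ts by blast
qed

definition node_at :: "nat \<Rightarrow> 'a set \<times> 'a set \<Rightarrow> bool" where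
  "node_at t N \<longleftrightarrow>
     (\<exists>t' p s. t' \<in> {2..t} \<and> consecutive P leq A t' p s \<and> bip_node leq (A p) (A s) N)"

definition insertion_child :: "nat \<Rightarrow> 'a set \<times> 'a set \<Rightarrow> 'a set \<times> 'a set \<Rightarrow> bool" where
  "insertion_child t M N \<longleftrightarrow> (\<exists>p s. consecutive P leq A (t - 1) p s \<and>
     sqlt P leq (A p) (A t) \<and> sqlt P leq (A t) (A s) \<and> bip_node leq (A p) (A s) N \<and>
     (bip_node leq (A p) (A t) M \<or> bip_node leq (A t) (A s) M) \<and>
     node_int P leq M \<subset> node_int P leq N)"

definition child_at :: "nat \<Rightarrow> ('a set \<times> 'a set) rel" where
  "child_at t = {(M, N). \<exists>t'\<in>{3..t}. insertion_child t' M N}"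

lemma is_node_iff_node_at: "is_node P leq A k N \<longleftrightarrow> node_at k N"
  unfolding is_node_def node_at_def bip_node_def by (rule refl)

lemma node_child_eq_child_at: "node_child P leq A k = child_at k"
  unfolding node_child_def child_at_def insertion_child_def bip_node_def
  by (simp add: Bex_def conj_assoc)

lemma child_at_mono: "t \<le> t' \<Longrightarrow> child_at t \<subseteq> child_at t'"
  unfolding child_at_def by auto

lemma node_at_vertex_layer:
  assumes "node_at t N" "t \<le> k" "u \<in> fst N \<union> snd N"
  obtains j where "j \<in> {1..t}" "u \<in> A j"
proof -
  obtain t' p s where tps: "t' \<in> {2..t}" "consecutive P leq A t' p s" "bip_node leq (A p) (A s) N"
    using assms(1) unfolding node_at_def by blast
  then have "p \<in> {1..t}" "s \<in> {1..t}" using consecutiveD[OF tps(2)] assms(2) by auto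
  moreover have "u \<in> A p \<or> u \<in> A s" using tps(3) assms(3) unfolding bip_node_def by blast
  ultimately show ?thesis using that by blast
qed

lemma node_at_2: "node_at 2 N \<Longrightarrow> N = (A 1, A 2)"
proof -
  assume "node_at 2 N"
  then obtain p s where ps: "consecutive P leq A 2 p s" "bip_node leq (A p) (A s) N"
    unfolding node_at_def by auto
  then have "p \<in> {1..2}" "s \<in> {1..2}" "sqlt P leq (A p) (A s)" "p \<noteq> s"
    using consecutiveD two_le_k by auto
  moreover have "sqlt P leq (A 1) (A 2)"
    using sqle_last_layer[OF one_in_range] sqlt_layer_iff[OF one_in_range two_in_range] by simp
  moreover have "p = 1 \<and> s = 2 \<or> p = 2 \<and> s = 1" using calculation(1,2,4) by auto
  ultimately have "p = 1" "s = 2"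
    using sqlt_layer_asym[OF one_in_range two_in_range] by auto
  then show "N = (A 1, A 2)"
    using ps(2) layers_disjoint[OF one_in_range two_in_range] layer_nonempty one_in_range two_in_range
      first_below_last by (intro bip_node_complete) auto
qed

end

subsection \<open>Inserting a layer\<close>

locale insertion = regular_layers +
  fixes t p s :: nat
  assumes stage: "t \<in> {3..k}"
    and consecutive_ps: "consecutive P leq A (t - 1) p s"
    and below: "sqlt P leq (A p) (A t)" and above: "sqlt P leq (A t) (A s)"
begin

lemma prev_stage_le: "t - 1 \<le> k"
  using stage by auto

lemma t_layer: "t \<in> {1..k}" and p_layer: "p \<in> {1..k}" and s_layer: "s \<in> {1..k}"
  and p_before: "p \<in> {1..t - 1}" and s_before: "s \<in> {1..t - 1}"
  using stage consecutiveD[OF consecutive_ps prev_stage_le] by auto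

lemma p_upto: "p \<in> {1..t}" and s_upto: "s \<in> {1..t}"
  using p_before s_before by auto

lemma p_ne_t: "p \<noteq> t" and s_ne_t: "s \<noteq> t" and p_ne_s: "p \<noteq> s"
  using p_before s_before stage consecutiveD[OF consecutive_ps prev_stage_le] by auto

lemma disjoint_pt: "A p \<inter> A t = {}" and disjoint_ts: "A t \<inter> A s = {}"
  and disjoint_ps: "A p \<inter> A s = {}"
  using layers_disjoint p_layer s_layer t_layer p_ne_t s_ne_t p_ne_s by auto

lemma layers_subset: "A p \<subseteq> P" "A t \<subseteq> P" "A s \<subseteq> P"
  using layer_subset p_layer s_layer t_layer by auto

lemma no_layer_between:
  "q \<in> {1..t - 1} \<Longrightarrow> sqlt P leq (A p) (A q) \<Longrightarrow> sqlt P leq (A q) (A s) \<Longrightarrow> False"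
  using consecutive_ps unfolding consecutive_def by blast

lemma consecutive_pt: "consecutive P leq A t p t"
  unfolding consecutive_def
proof (intro conjI)
  show "p \<in> {1..t}" "t \<in> {1..t}" "sqlt P leq (A p) (A t)" using p_before stage below by auto
  show "\<not> (\<exists>q\<in>{1..t}. sqlt P leq (A p) (A q) \<and> sqlt P leq (A q) (A t))"
  proof
    assume "\<exists>q\<in>{1..t}. sqlt P leq (A p) (A q) \<and> sqlt P leq (A q) (A t)"
    then obtain q where q: "q \<in> {1..t}" "sqlt P leq (A p) (A q)" "sqlt P leq (A q) (A t)" by blast
    have "q \<noteq> t" using q(3) unfolding sqlt_def by blast
    then have "q \<in> {1..t - 1}" "q \<in> {1..k}" using q(1) stage by auto
    then show False using no_layer_between q(2) sqlt_layer_trans[OF _ t_layer s_layer q(3) above] by blast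
  qed
qed

lemma consecutive_ts: "consecutive P leq A t t s"
  unfolding consecutive_def
proof (intro conjI)
  show "t \<in> {1..t}" "s \<in> {1..t}" "sqlt P leq (A t) (A s)" using s_before stage above by auto
  show "\<not> (\<exists>q\<in>{1..t}. sqlt P leq (A t) (A q) \<and> sqlt P leq (A q) (A s))"
  proof
    assume "\<exists>q\<in>{1..t}. sqlt P leq (A t) (A q) \<and> sqlt P leq (A q) (A s)"
    then obtain q where q: "q \<in> {1..t}" "sqlt P leq (A t) (A q)" "sqlt P leq (A q) (A s)" by blast
    have "q \<noteq> t" using q(2) unfolding sqlt_def by blast
    then have "q \<in> {1..t - 1}" "q \<in> {1..k}" using q(1) stage by auto
    then show False using no_layer_between q(3) sqlt_layer_trans[OF p_layer t_layer _ below q(2)] by blast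
  qed
qed

lemma consecutive_from_inserted:
  assumes c: "consecutive P leq A t t s'"
  shows "s' = s"
proof (rule ccontr)
  assume "s' \<noteq> s"
  have s': "s' \<in> {1..t - 1}" "s' \<in> {1..k}" "sqlt P leq (A t) (A s')"
    using consecutiveD[OF c] stage by auto
  consider "sqlt P leq (A s') (A s)" | "sqlt P leq (A s) (A s')"
    using sqlt_layers_linear[OF s'(2) s_layer \<open>s' \<noteq> s\<close>] by blast
  then show False
  proof cases
    case 1
    then show False
      using no_layer_between[OF s'(1) sqlt_layer_trans[OF p_layer t_layer s'(2) below s'(3)]] by blast
  next
    case 2
    then show False using c above s_upto unfolding consecutive_def by blast
  qed
qed

lemma consecutive_to_inserted:
  assumes c: "consecutive P leq A t p' t"
  shows "p' = p"
proof (rule ccontr)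
  assume "p' \<noteq> p"
  have p': "p' \<in> {1..t - 1}" "p' \<in> {1..k}" "sqlt P leq (A p') (A t)"
    using consecutiveD[OF c] stage by auto
  consider "sqlt P leq (A p) (A p')" | "sqlt P leq (A p') (A p)"
    using sqlt_layers_linear[OF p_layer p'(2) \<open>p' \<noteq> p\<close>[symmetric]] by blast
  then show False
  proof cases
    case 1
    then show False
      using no_layer_between[OF p'(1) _ sqlt_layer_trans[OF p'(2) t_layer s_layer p'(3) above]] by blast
  next
    case 2
    then show False using c below p_upto unfolding consecutive_def by blast
  qed
qed

lemma consecutive_at_insertion:
  assumes c: "consecutive P leq A t p' s'"
  shows "p' = p \<and> s' = t \<or> p' = t \<and> s' = s \<or> consecutive P leq A (t - 1) p' s'"
proof -
  consider "p' = t" | "s' = t" | "p' \<noteq> t" "s' \<noteq> t" by blast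
  then show ?thesis
  proof cases
    case 1
    then show ?thesis using consecutive_from_inserted c by blast
  next
    case 2
    then show ?thesis using consecutive_to_inserted c by blast
  next
    case 3
    then have "consecutive P leq A (t - 1) p' s'"
      using c consecutiveD[OF c] stage unfolding consecutive_def by auto
    then show ?thesis by blast
  qed
qed

definition new_node :: "'a set \<times> 'a set \<Rightarrow> bool" where
  "new_node G \<longleftrightarrow> bip_node leq (A p) (A t) G \<or> bip_node leq (A t) (A s) G"

lemma node_at_stage_cases: "node_at t G \<Longrightarrow> new_node G \<or> node_at (t - 1) G"
proof -
  assume "node_at t G"
  then obtain t' p' s' where tps: "t' \<in> {2..t}" "consecutive P leq A t' p' s'"
    "bip_node leq (A p') (A s') G"
    unfolding node_at_def by blast
  show ?thesis
  proof (cases "t' = t")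
    case True
    then have "p' = p \<and> s' = t \<or> p' = t \<and> s' = s \<or> consecutive P leq A (t - 1) p' s'"
      using consecutive_at_insertion tps(2) by simp
    moreover have "t - 1 \<in> {2..t - 1}" using stage by auto
    ultimately show ?thesis using tps(3) unfolding new_node_def node_at_def by blast
  next
    case False
    then have "t' \<in> {2..t - 1}" using tps(1) by auto
    then show ?thesis using tps unfolding node_at_def by blast
  qed
qed

lemma node_at_prev_vertex:
  assumes "node_at (t - 1) N" "u \<in> fst N \<union> snd N"
  shows "u \<notin> A t" "\<exists>j\<in>{1..t - 1}. u \<in> A j"
proof -
  obtain j where j: "j \<in> {1..t - 1}" "u \<in> A j"
    using node_at_vertex_layer[OF assms(1) prev_stage_le assms(2)] .
  then show "\<exists>j\<in>{1..t - 1}. u \<in> A j" by blast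
  have "j \<in> {1..k}" "j \<noteq> t" using j(1) stage by auto
  then show "u \<notin> A t" using layers_disjoint[OF _ t_layer] j(2) by blast
qed

lemma nothing_between_at_prev:
  assumes j: "j \<in> {1..t - 1}" and xcy: "x \<in> A p" "c \<in> A j" "y \<in> A s" "leq x c" "leq c y"
  shows "c = x \<or> c = y"
proof (rule ccontr)
  assume ne: "\<not> (c = x \<or> c = y)"
  have jk: "j \<in> {1..k}" using j stage by auto
  have P: "x \<in> P" "c \<in> P" "y \<in> P" using xcy layer_subset jk p_layer s_layer by blast+
  have "j \<noteq> p" using layer_antichain[OF p_layer xcy(1)] xcy(2,4) ne by auto
  then have "sqlt P leq (A p) (A j)" using leq_layers_sqlt[OF p_layer jk xcy(1,2,4)] by blast
  moreover have "j \<noteq> s" using layer_antichain[OF s_layer _ xcy(3)] xcy(2,5) ne by auto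
  then have "sqlt P leq (A j) (A s)" using leq_layers_sqlt[OF jk s_layer xcy(2,3,5)] by blast
  ultimately show False using no_layer_between[OF j] by blast
qed

abbreviation adj_ps :: "('a \<times> 'a) set" where "adj_ps \<equiv> bip_adj leq (A p) (A s)"

definition parent :: "'a \<Rightarrow> 'a set \<times> 'a set" where
  "parent x = (adj_ps\<^sup>* `` {x} \<inter> A p, adj_ps\<^sup>* `` {x} \<inter> A s)"

lemma parent_vertices: "x \<in> A p \<Longrightarrow> fst (parent x) \<union> snd (parent x) = adj_ps\<^sup>* `` {x}"
  unfolding parent_def using bip_component_subset[OF bip_component_of[of x]] by auto

lemma bip_node_parent: "x \<in> A p \<Longrightarrow> bip_node leq (A p) (A s) (parent x)"
  unfolding bip_node_def using parent_vertices bip_component_of[of x] by (auto simp: parent_def)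

lemma root_in_parent: "x \<in> A p \<Longrightarrow> x \<in> fst (parent x)"
  unfolding parent_def by simp

lemma node_at_parent: "x \<in> A p \<Longrightarrow> node_at (t - 1) (parent x)"
  unfolding node_at_def using stage consecutive_ps bip_node_parent
  by (intro exI[of _ "t - 1"] exI[of _ p] exI[of _ s]) auto

lemma parent_no_child_at_prev:
  assumes x: "x \<in> A p" and y: "y \<in> snd (parent x)"
  shows "(G, parent x) \<notin> child_at (t - 1)"
proof
  assume "(G, parent x) \<in> child_at (t - 1)"
  then obtain t' p' s' where t': "t' \<in> {3..t - 1}" and c: "consecutive P leq A (t' - 1) p' s'"
    "sqlt P leq (A p') (A t')" "sqlt P leq (A t') (A s')" "bip_node leq (A p') (A s') (parent x)"
    unfolding child_at_def insertion_child_def by blast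
  have idx: "p' \<in> {1..k}" "s' \<in> {1..k}" using consecutiveD[OF c(1)] t' stage by auto
  have "x \<in> A p'" "y \<in> A s'" "y \<in> A s"
    using c(4) root_in_parent[OF x] y unfolding bip_node_def parent_def by auto
  then have "p' = p" "s' = s" using layer_unique idx p_layer s_layer x by blast+
  moreover have "t' \<in> {1..t - 1}" using t' by auto
  ultimately show False using no_layer_between c(2,3) by blast
qed

end

locale insertion_matchings = insertion +
  fixes Mpt Mts :: "('a \<times> 'a) set"
  assumes matching_pt: "perfect_matching leq (A p) (A t) Mpt"
    and matching_ts: "perfect_matching leq (A t) (A s) Mts"
begin

lemma mate_pt: "x \<in> A p \<Longrightarrow> mate Mpt x \<in> A t \<and> lt leq x (mate Mpt x)"
  using perfect_matching_edgeD[OF matching_pt perfect_matching_mate[OF matching_pt]] by blast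

lemma comate_pt: "z \<in> A t \<Longrightarrow> comate Mpt z \<in> A p \<and> lt leq (comate Mpt z) z"
  using perfect_matching_edgeD[OF matching_pt perfect_matching_comate[OF matching_pt]] by blast

lemma mate_ts: "z \<in> A t \<Longrightarrow> mate Mts z \<in> A s \<and> lt leq z (mate Mts z)"
  using perfect_matching_edgeD[OF matching_ts perfect_matching_mate[OF matching_ts]] by blast

lemma mate_comate_pt: "z \<in> A t \<Longrightarrow> mate Mpt (comate Mpt z) = z"
  using perfect_matching_mate_eq[OF matching_pt perfect_matching_comate[OF matching_pt]] .

lemma comate_mate_pt: "x \<in> A p \<Longrightarrow> comate Mpt (mate Mpt x) = x"
  using perfect_matching_comate_eq[OF matching_pt perfect_matching_mate[OF matching_pt]] .

lemma lt_via_t: "a \<in> A p \<Longrightarrow> z \<in> A t \<Longrightarrow> y \<in> A s \<Longrightarrow> lt leq a z \<Longrightarrow> lt leq z y \<Longrightarrow> lt leq a y"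
  using lt_trans layers_subset by blast

definition Mps :: "('a \<times> 'a) set" where
  "Mps = Mpt O Mts"

lemma matching_ps: "perfect_matching leq (A p) (A s) Mps"
  unfolding Mps_def using perfect_matching_relcomp[OF matching_pt matching_ts] lt_via_t by blast

lemma mate_ps: "x \<in> A p \<Longrightarrow> mate Mps x \<in> A s \<and> lt leq x (mate Mps x)"
  using perfect_matching_edgeD[OF matching_ps perfect_matching_mate[OF matching_ps]] by blast

lemma Mps_relcompI: "(x, z) \<in> Mpt \<Longrightarrow> (z, y) \<in> Mts \<Longrightarrow> (x, y) \<in> Mps"
  unfolding Mps_def by blast

lemma mate_ps_eq: "z \<in> A t \<Longrightarrow> mate Mps (comate Mpt z) = mate Mts z"
  using perfect_matching_mate_eq[OF matching_ps Mps_relcompI[OF perfect_matching_comate[OF matching_pt]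
      perfect_matching_mate[OF matching_ts]]] .

lemma adj_ps_iff: "a \<in> A p \<Longrightarrow> y \<in> A s \<Longrightarrow> lt leq a y \<Longrightarrow> (a, y) \<in> adj_ps \<and> (y, a) \<in> adj_ps"
  unfolding bip_adj_def by auto

(* Identifying each element of A t with its lower mate turns paths through A t into paths of
   (A p, A s, <); this is how the parent of a new node is found. *)

definition collapse :: "'a \<Rightarrow> 'a" where
  "collapse u = (if u \<in> A t then comate Mpt u else u)"

lemma collapse_lower_edge:
  assumes "a \<in> A p" "z \<in> A t" "lt leq a z"
  shows "(a, comate Mpt z) \<in> adj_ps\<^sup>*"
proof -
  have y: "mate Mts z \<in> A s" "lt leq z (mate Mts z)" using mate_ts assms(2) by blast+
  have "(a, mate Mts z) \<in> adj_ps" using adj_ps_iff lt_via_t assms y by blast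
  moreover have "(mate Mts z, comate Mpt z) \<in> adj_ps" using adj_ps_iff lt_via_t comate_pt assms(2) y by blast
  ultimately show ?thesis by simp
qed

lemma collapse_upper_edge:
  assumes "z \<in> A t" "y \<in> A s" "lt leq z y"
  shows "(comate Mpt z, y) \<in> adj_ps\<^sup>*"
  using adj_ps_iff lt_via_t comate_pt assms by blast

lemma collapse_edge:
  assumes "(v, w) \<in> bip_adj leq (A p) (A t) \<union> bip_adj leq (A t) (A s)"
  shows "(collapse v, collapse w) \<in> adj_ps\<^sup>*"
proof -
  have sym: "(b, a) \<in> adj_ps\<^sup>*" if "(a, b) \<in> adj_ps\<^sup>*" for a b
    using symD[OF sym_rtrancl[OF sym_bip_adj] that] .
  consider "v \<in> A p" "w \<in> A t" "lt leq v w" | "w \<in> A p" "v \<in> A t" "lt leq w v"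
    | "v \<in> A t" "w \<in> A s" "lt leq v w" | "w \<in> A t" "v \<in> A s" "lt leq w v"
    using assms unfolding bip_adj_def by blast
  then show ?thesis
  proof cases
    case 1
    then have "collapse v = v" "collapse w = comate Mpt w"
      using disjoint_pt unfolding collapse_def by auto
    then show ?thesis using collapse_lower_edge[OF 1] by simp
  next
    case 2
    then have "collapse w = w" "collapse v = comate Mpt v"
      using disjoint_pt unfolding collapse_def by auto
    then show ?thesis using sym[OF collapse_lower_edge[OF 2]] by simp
  next
    case 3
    then have "collapse v = comate Mpt v" "collapse w = w"
      using disjoint_ts unfolding collapse_def by auto
    then show ?thesis using collapse_upper_edge[OF 3] by simp
  next
    case 4
    then have "collapse w = comate Mpt w" "collapse v = v"
      using disjoint_ts unfolding collapse_def by auto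
    then show ?thesis using sym[OF collapse_upper_edge[OF 4]] by simp
  qed
qed

lemma collapse_rtrancl:
  assumes "(u, v) \<in> (bip_adj leq (A p) (A t) \<union> bip_adj leq (A t) (A s))\<^sup>*"
  shows "(collapse u, collapse v) \<in> adj_ps\<^sup>*"
  using assms
proof (induction rule: rtrancl_induct)
  case (step v w)
  show ?case using rtrancl_trans[OF step(3) collapse_edge[OF step(2)]] .
qed simp

lemma comate_ps: "y \<in> A s \<Longrightarrow> comate Mps y \<in> A p \<and> lt leq (comate Mps y) y"
  using perfect_matching_edgeD[OF matching_ps perfect_matching_comate[OF matching_ps]] by blast

lemma parent_mate:
  assumes x: "x \<in> A p" and a: "a \<in> fst (parent x)"
  shows "mate Mps a \<in> snd (parent x)"
proof -
  have "a \<in> A p" using a unfolding parent_def by simp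
  from mate_ps[OF this] show ?thesis
    using bip_node_edge_iff[OF bip_node_parent[OF x] disjoint_ps \<open>a \<in> A p\<close>] a by blast
qed

lemma parent_comate:
  assumes x: "x \<in> A p" and y: "y \<in> snd (parent x)"
  shows "comate Mps y \<in> fst (parent x)"
proof -
  have "y \<in> A s" using y unfolding parent_def by simp
  from comate_ps[OF this] show ?thesis
    using bip_node_edge_iff[OF bip_node_parent[OF x] disjoint_ps _ \<open>y \<in> A s\<close>] y by blast
qed

lemma collapse_in_parent_int:
  assumes x: "x \<in> A p" and u: "u \<in> A p \<union> A t \<union> A s" and path: "(x, collapse u) \<in> adj_ps\<^sup>*"
  shows "u \<in> node_int P leq (parent x)"
proof -
  have uP: "u \<in> P" using u layers_subset by blast
  have "collapse u \<in> A p \<union> A s" using u comate_pt unfolding collapse_def by auto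
  then have cu: "collapse u \<in> fst (parent x) \<union> snd (parent x)"
    using path unfolding parent_def by auto
  consider "u \<in> A p" | "u \<in> A t" | "u \<in> A s" using u by blast
  then show ?thesis
  proof cases
    case 1
    then have "collapse u = u" using disjoint_pt unfolding collapse_def by auto
    then have "u \<in> fst (parent x)" using cu 1 disjoint_ps unfolding parent_def by auto
    then show ?thesis
      using node_intI[where leq=leq, OF uP _ leq_refl[OF uP] parent_mate[OF x]] mate_ps[OF 1] unfolding lt_def by blast
  next
    case 2
    let ?c = "comate Mpt u"
    have "collapse u = ?c" using 2 unfolding collapse_def by simp
    then have "?c \<in> fst (parent x)" using cu comate_pt[OF 2] disjoint_ps unfolding parent_def by auto
    moreover have "leq ?c u" "leq u (mate Mps ?c)"
      using comate_pt[OF 2] mate_ts[OF 2] mate_ps_eq[OF 2] unfolding lt_def by auto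
    ultimately show ?thesis using node_intI[where leq=leq, OF uP _ _ parent_mate[OF x]] by blast
  next
    case 3
    then have "collapse u = u" using disjoint_ts unfolding collapse_def by auto
    then have "u \<in> snd (parent x)" using cu 3 disjoint_ps unfolding parent_def by auto
    then show ?thesis
      using node_intI[where leq=leq, OF uP parent_comate[OF x] _ _ leq_refl[OF uP]] comate_ps[OF 3] unfolding lt_def by blast
  qed
qed

lemma new_node_vertices_in_parent_int:
  assumes x: "x \<in> A p" and G: "new_node G" and root: "mate Mpt x \<in> fst G \<union> snd G"
  shows "fst G \<union> snd G \<subseteq> node_int P leq (parent x)"
proof
  fix u assume u: "u \<in> fst G \<union> snd G"
  let ?adj = "bip_adj leq (A p) (A t) \<union> bip_adj leq (A t) (A s)"
  have "(mate Mpt x, u) \<in> ?adj\<^sup>* \<and> u \<in> A p \<union> A t \<union> A s"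
    using G unfolding new_node_def
  proof
    assume "bip_node leq (A p) (A t) G"
    then have "(mate Mpt x, u) \<in> (bip_adj leq (A p) (A t))\<^sup>*" "u \<in> A p \<union> A t"
      using bip_component_eq[of leq _ _ _ "mate Mpt x"] root u unfolding bip_node_def by blast+
    then show ?thesis using rtrancl_mono[of _ ?adj] by blast
  next
    assume "bip_node leq (A t) (A s) G"
    then have "(mate Mpt x, u) \<in> (bip_adj leq (A t) (A s))\<^sup>*" "u \<in> A t \<union> A s"
      using bip_component_eq[of leq _ _ _ "mate Mpt x"] root u unfolding bip_node_def by blast+
    then show ?thesis using rtrancl_mono[of _ ?adj] by blast
  qed
  moreover have "collapse (mate Mpt x) = x"
    using mate_pt[OF x] comate_mate_pt[OF x] unfolding collapse_def by simp
  ultimately show "u \<in> node_int P leq (parent x)"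
    using collapse_rtrancl collapse_in_parent_int[OF x] by metis
qed

lemma ends_in_parent_int:
  assumes x: "x \<in> A p"
  shows "x \<in> node_int P leq (parent x)" "mate Mps x \<in> node_int P leq (parent x)"
proof -
  have y: "mate Mps x \<in> snd (parent x)" using parent_mate[OF x root_in_parent[OF x]] .
  have P: "x \<in> P" "mate Mps x \<in> P" using x mate_ps[OF x] layers_subset by blast+
  have "leq x (mate Mps x)" using mate_ps[OF x] unfolding lt_def by blast
  then show "x \<in> node_int P leq (parent x)" "mate Mps x \<in> node_int P leq (parent x)"
    using node_intI[where leq=leq, OF P(1) root_in_parent[OF x] leq_refl[OF P(1)] y]
      node_intI[where leq=leq, OF P(2) root_in_parent[OF x] _ y leq_refl[OF P(2)]] by auto
qed

lemma not_leq_above_below: "y \<in> A s \<Longrightarrow> h \<in> A t \<Longrightarrow> \<not> leq y h"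
  using leq_layers_sqlt[OF s_layer t_layer] sqlt_layer_asym[OF t_layer s_layer above] s_ne_t by blast

lemma not_leq_below_above: "g \<in> A t \<Longrightarrow> x \<in> A p \<Longrightarrow> \<not> leq g x"
  using leq_layers_sqlt[OF t_layer p_layer] sqlt_layer_asym[OF p_layer t_layer below] p_ne_t by blast

lemma parent_int_not_subset:
  assumes x: "x \<in> A p" and G: "new_node G"
  shows "\<not> node_int P leq (parent x) \<subseteq> node_int P leq G"
  using G unfolding new_node_def
proof
  assume "bip_node leq (A p) (A t) G"
  then have "mate Mps x \<notin> node_int P leq G"
    using not_leq_above_below mate_ps[OF x]
    unfolding bip_node_def node_int_def down_set_def by blast
  then show ?thesis using ends_in_parent_int[OF x] by blast
next
  assume "bip_node leq (A t) (A s) G"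
  then have "x \<notin> node_int P leq G"
    using not_leq_below_above x unfolding bip_node_def node_int_def up_set_def by blast
  then show ?thesis using ends_in_parent_int[OF x] by blast
qed

lemma new_node_child_of_parent:
  assumes x: "x \<in> A p" and G: "new_node G" and root: "mate Mpt x \<in> fst G \<union> snd G"
  shows "(G, parent x) \<in> child_at t"
proof -
  have "fst (parent x) \<union> snd (parent x) \<subseteq> P"
    using layers_subset unfolding parent_def by auto
  then have "node_int P leq G \<subseteq> node_int P leq (parent x)"
    using node_int_subset new_node_vertices_in_parent_int[OF assms] regular
    unfolding regular_poset_def by blast
  then have "node_int P leq G \<subset> node_int P leq (parent x)"
    using parent_int_not_subset[OF x G] by blast
  then have "insertion_child t G (parent x)"
    unfolding insertion_child_def using consecutive_ps below above bip_node_parent[OF x] G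
    unfolding new_node_def by blast
  then show ?thesis unfolding child_at_def using stage by auto
qed

lemma parent_not_descendant_at_prev:
  assumes x: "x \<in> A p"
  shows "(G, parent x) \<notin> (child_at (t - 1))\<^sup>+"
proof
  assume "(G, parent x) \<in> (child_at (t - 1))\<^sup>+"
  then obtain G' where "(G', parent x) \<in> child_at (t - 1)" by (blast elim: tranclE)
  moreover have "mate Mps x \<in> snd (parent x)" using parent_mate[OF x root_in_parent[OF x]] .
  ultimately show False using parent_no_child_at_prev[OF x] by blast
qed

end

locale insertion_step = insertion_matchings +
  fixes F :: "('a set \<times> 'a set) set" and M :: "'a set \<times> 'a set \<Rightarrow> ('a \<times> 'a) set"
  assumes F_nodes: "F \<subseteq> Collect (node_at t)"
    and F_ancestor_free: "\<forall>G\<in>F. \<forall>N\<in>F. (G, N) \<notin> (child_at t)\<^sup>+"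
    and F_matched: "\<forall>N\<in>F. perfect_matching leq (fst N) (snd N) (M N)"
    and Mpt_extends: "\<And>G. G \<in> F \<Longrightarrow> bip_node leq (A p) (A t) G \<Longrightarrow> M G \<subseteq> Mpt"
    and Mts_extends: "\<And>G. G \<in> F \<Longrightarrow> bip_node leq (A t) (A s) G \<Longrightarrow> M G \<subseteq> Mts"
begin

(* F_prev replaces every new node of F by its parent, the node of (A p, A s, <) into which
   collapse maps its vertices. *)

definition roots :: "'a set" where
  "roots = {x \<in> A p. \<exists>G\<in>F. new_node G \<and> mate Mpt x \<in> fst G \<union> snd G}"

definition F_prev :: "('a set \<times> 'a set) set" where
  "F_prev = {G \<in> F. \<not> new_node G} \<union> parent ` roots"

definition M_prev :: "'a set \<times> 'a set \<Rightarrow> ('a \<times> 'a) set" where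
  "M_prev N = (if N \<in> F then M N else Mps \<inter> fst N \<times> snd N)"

lemma roots_subset: "roots \<subseteq> A p"
  unfolding roots_def by blast

lemma parent_root_child:
  assumes "x \<in> roots"
  obtains G where "G \<in> F" "(G, parent x) \<in> child_at t"
  using assms new_node_child_of_parent unfolding roots_def by blast

lemma parent_root_not_in_F: "x \<in> roots \<Longrightarrow> parent x \<notin> F"
  using parent_root_child F_ancestor_free by blast

lemma F_prev_nodes: "F_prev \<subseteq> Collect (node_at (t - 1))"
proof
  fix N assume "N \<in> F_prev"
  then consider "N \<in> F" "\<not> new_node N" | x where "x \<in> roots" "N = parent x"
    unfolding F_prev_def by blast
  then show "N \<in> Collect (node_at (t - 1))"
  proof cases
    case 1
    then show ?thesis using F_nodes node_at_stage_cases by blast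
  next
    case 2
    then show ?thesis using node_at_parent roots_subset by blast
  qed
qed

lemma F_prev_ancestor_free: "\<forall>G\<in>F_prev. \<forall>N\<in>F_prev. (G, N) \<notin> (child_at (t - 1))\<^sup>+"
proof (intro ballI notI)
  fix G N assume G: "G \<in> F_prev" and N: "N \<in> F_prev" and GN: "(G, N) \<in> (child_at (t - 1))\<^sup>+"
  then have GN': "(G, N) \<in> (child_at t)\<^sup>+" using trancl_mono child_at_mono[of "t - 1" t] by auto
  have "N \<notin> parent ` roots" using GN parent_not_descendant_at_prev roots_subset by blast
  then have "N \<in> F" using N unfolding F_prev_def by blast
  show False
  proof (cases "G \<in> F")
    case True
    then show False using F_ancestor_free GN' \<open>N \<in> F\<close> by blast
  next
    case False
    then obtain x where "x \<in> roots" "G = parent x" using G unfolding F_prev_def by blast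
    then obtain G0 where "G0 \<in> F" "(G0, G) \<in> child_at t" using parent_root_child by metis
    then have "(G0, N) \<in> (child_at t)\<^sup>+" using trancl_into_trancl2 GN' by metis
    then show False using F_ancestor_free \<open>G0 \<in> F\<close> \<open>N \<in> F\<close> by blast
  qed
qed

lemma parent_matching:
  assumes x: "x \<in> A p"
  shows "perfect_matching leq (fst (parent x)) (snd (parent x)) (Mps \<inter> fst (parent x) \<times> snd (parent x))"
proof (rule perfect_matching_restrict[OF matching_ps])
  have node: "bip_node leq (A p) (A s) (parent x)" using bip_node_parent[OF x] .
  then show "fst (parent x) \<subseteq> A p" "snd (parent x) \<subseteq> A s" unfolding bip_node_def by blast+
  show "a \<in> fst (parent x) \<longleftrightarrow> b \<in> snd (parent x)" if "(a, b) \<in> Mps" for a b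
    using bip_node_edge_iff[OF node disjoint_ps perfect_matching_edgeD[OF matching_ps that]] .
qed

lemma F_prev_matched: "\<forall>N\<in>F_prev. perfect_matching leq (fst N) (snd N) (M_prev N)"
proof
  fix N assume "N \<in> F_prev"
  then consider "N \<in> F" | x where "x \<in> roots" "N = parent x" "N \<notin> F"
    unfolding F_prev_def using parent_root_not_in_F by blast
  then show "perfect_matching leq (fst N) (snd N) (M_prev N)"
  proof cases
    case 1
    then show ?thesis using F_matched unfolding M_prev_def by simp
  next
    case 2
    then show ?thesis using parent_matching roots_subset unfolding M_prev_def by auto
  qed
qed

lemma F_prev_vertex:
  assumes "u \<in> node_vertices F_prev"
  shows "u \<notin> A t" "\<exists>j\<in>{1..t - 1}. u \<in> A j"
  using assms F_prev_nodes node_at_prev_vertex unfolding node_vertices_def by blast+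

lemma root_in_F_prev: "x \<in> roots \<Longrightarrow> parent x \<in> F_prev \<and> x \<in> fst (parent x)"
  using root_in_parent roots_subset unfolding F_prev_def by blast

lemma root_matched_prev: "x \<in> roots \<Longrightarrow> (x, mate Mps x) \<in> M_prev (parent x)"
  using perfect_matching_mate[OF matching_ps] parent_mate root_in_parent parent_root_not_in_F roots_subset
  unfolding M_prev_def by auto

lemma vertex_t_root:
  assumes z: "z \<in> A t" "z \<in> node_vertices F"
  shows "comate Mpt z \<in> roots"
proof -
  obtain G where G: "G \<in> F" "z \<in> fst G \<union> snd G" using z(2) unfolding node_vertices_def by blast
  then have "new_node G" using node_at_stage_cases node_at_prev_vertex(1) F_nodes z(1) by blast
  then show ?thesis
    using G comate_pt[OF z(1)] mate_comate_pt[OF z(1)] unfolding roots_def by auto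
qed

lemma vertex_prev:
  assumes u: "u \<in> node_vertices F" "u \<notin> A t"
  shows "u \<in> node_vertices F_prev"
proof -
  obtain G where G: "G \<in> F" "u \<in> fst G \<union> snd G" using u(1) unfolding node_vertices_def by blast
  have pmG: "perfect_matching leq (fst G) (snd G) (M G)" using F_matched G(1) by blast
  consider "\<not> new_node G" | "bip_node leq (A p) (A t) G" | "bip_node leq (A t) (A s) G"
    unfolding new_node_def by blast
  then show ?thesis
  proof cases
    case 1
    then show ?thesis using G unfolding F_prev_def node_vertices_def by blast
  next
    case 2
    then have "u \<in> fst G" "u \<in> A p" using G(2) u(2) unfolding bip_node_def by blast+
    let ?b = "mate (M G) u"
    have e: "(u, ?b) \<in> M G" using perfect_matching_mate[OF pmG \<open>u \<in> fst G\<close>] .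
    have "mate Mpt u = ?b"
      using perfect_matching_mate_eq[OF matching_pt subsetD[OF Mpt_extends[OF G(1) 2] e]] .
    moreover have "?b \<in> snd G" using perfect_matching_edgeD(2)[OF pmG e] .
    ultimately have "u \<in> roots" using \<open>u \<in> A p\<close> G(1) 2 unfolding roots_def new_node_def by auto
    then show ?thesis using root_in_F_prev unfolding node_vertices_def by blast
  next
    case 3
    then have "u \<in> snd G" using G(2) u(2) unfolding bip_node_def by blast
    let ?z = "comate (M G) u"
    have e: "(?z, u) \<in> M G" using perfect_matching_comate[OF pmG \<open>u \<in> snd G\<close>] .
    then have "?z \<in> fst G" using perfect_matching_edgeD(1)[OF pmG] by blast
    then have z: "?z \<in> A t" "?z \<in> node_vertices F"
      using 3 G(1) unfolding bip_node_def node_vertices_def by blast+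
    let ?x = "comate Mpt ?z"
    have "mate Mts ?z = u"
      using perfect_matching_mate_eq[OF matching_ts subsetD[OF Mts_extends[OF G(1) 3] e]] .
    then have edge: "(?x, u) \<in> M_prev (parent ?x)"
      using root_matched_prev[OF vertex_t_root[OF z]] mate_ps_eq[OF z(1)] by simp
    have N: "parent ?x \<in> F_prev" using root_in_F_prev[OF vertex_t_root[OF z]] by blast
    have "u \<in> snd (parent ?x)"
      using perfect_matching_edgeD(2)[OF F_prev_matched[rule_format, OF N] edge] .
    then show ?thesis using N unfolding node_vertices_def by blast
  qed
qed

end

locale chain_lifting = insertion_step +
  fixes C :: "nat \<Rightarrow> 'a set"
  assumes partition_prev: "matched_chain_partition P leq (width P leq) F_prev M_prev C"
begin

lemma chain_C: "i < width P leq \<Longrightarrow> chain P leq (C i)"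
  using partition_prev unfolding matched_chain_partition_def by simp

lemma vertices_C: "(\<Union>i<width P leq. C i) = node_vertices F_prev"
  using partition_prev unfolding matched_chain_partition_def by simp

lemma matched_C: "N \<in> F_prev \<Longrightarrow> (a, b) \<in> M_prev N \<Longrightarrow> \<exists>i<width P leq. a \<in> C i \<and> b \<in> C i"
  using partition_prev unfolding matched_chain_partition_def by fast

lemma disjoint_C: "i < width P leq \<Longrightarrow> j < width P leq \<Longrightarrow> u \<in> C i \<Longrightarrow> u \<in> C j \<Longrightarrow> i = j"
  using partition_prev unfolding matched_chain_partition_def by auto

lemma root_chain: "x \<in> roots \<Longrightarrow> \<exists>i<width P leq. x \<in> C i \<and> mate Mps x \<in> C i"
  using matched_C[OF conjunct1[OF root_in_F_prev] root_matched_prev] .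

lemma C_vertex: "i < width P leq \<Longrightarrow> u \<in> C i \<Longrightarrow> u \<in> node_vertices F_prev"
  unfolding vertices_C[symmetric] by blast

definition lifted :: "nat \<Rightarrow> 'a set" where
  "lifted i = (C i \<inter> node_vertices F) \<union> {z \<in> A t \<inter> node_vertices F. comate Mpt z \<in> C i}"

lemma lifted_comparable:
  assumes i: "i < width P leq" and c: "c \<in> C i"
    and z: "z \<in> A t" "z \<in> node_vertices F" "comate Mpt z \<in> C i"
  shows "leq c z \<or> leq z c"
proof -
  let ?x = "comate Mpt z" and ?y = "mate Mts z"
  have x: "?x \<in> A p" "lt leq ?x z" and y: "?y \<in> A s" "lt leq z ?y"
    using comate_pt[OF z(1)] mate_ts[OF z(1)] by auto
  obtain j where j: "j < width P leq" "?x \<in> C j" "mate Mps ?x \<in> C j"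
    using root_chain[OF vertex_t_root[OF z(1,2)]] by blast
  have "j = i" using disjoint_C[OF j(1) i j(2) z(3)] .
  then have yi: "?y \<in> C i" using j(3) mate_ps_eq[OF z(1)] by simp
  obtain l where l: "l \<in> {1..t - 1}" "c \<in> A l" using F_prev_vertex(2)[OF C_vertex[OF i c]] by blast
  have cmp: "leq u v \<or> leq v u" if "u \<in> C i" "v \<in> C i" for u v
    using chain_C[OF i] that unfolding chain_def by blast
  have P: "c \<in> P" "?x \<in> P" "z \<in> P" "?y \<in> P"
    using chain_C[OF i] c x(1) y(1) z(1) layers_subset unfolding chain_def by blast+
  show ?thesis
  proof (rule ccontr)
    assume nc: "\<not> (leq c z \<or> leq z c)"
    then have "\<not> leq c ?x" "\<not> leq ?y c"
      using leq_trans[OF P(1,2,3)] leq_trans[OF P(3,4,1)] x(2) y(2) unfolding lt_def by blast+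
    then have "leq ?x c" "leq c ?y" using cmp c z(3) yi by blast+
    then have "c = ?x \<or> c = ?y" using nothing_between_at_prev[OF l(1) x(1) l(2) y(1)] by blast
    then show False using nc x(2) y(2) unfolding lt_def by auto
  qed
qed

lemma lifted_chain:
  assumes i: "i < width P leq"
  shows "chain P leq (lifted i)"
  unfolding chain_def
proof (intro conjI ballI)
  show "lifted i \<subseteq> P" using chain_C[OF i] layers_subset unfolding lifted_def chain_def by blast
next
  fix u v assume "u \<in> lifted i" "v \<in> lifted i"
  then consider "u \<in> C i" "v \<in> C i"
    | "u \<in> C i" "v \<in> A t" "v \<in> node_vertices F" "comate Mpt v \<in> C i"
    | "v \<in> C i" "u \<in> A t" "u \<in> node_vertices F" "comate Mpt u \<in> C i"
    | "u \<in> A t" "v \<in> A t" "comate Mpt u \<in> C i" "comate Mpt v \<in> C i"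
    unfolding lifted_def by blast
  then show "leq u v \<or> leq v u"
  proof cases
    case 1
    then show ?thesis using chain_C[OF i] unfolding chain_def by blast
  next
    case 2
    then show ?thesis using lifted_comparable[OF i] by blast
  next
    case 3
    then show ?thesis using lifted_comparable[OF i] by blast
  next
    case 4
    have "leq (comate Mpt u) (comate Mpt v) \<or> leq (comate Mpt v) (comate Mpt u)"
      using chain_C[OF i] 4(3,4) unfolding chain_def by blast
    then have "comate Mpt u = comate Mpt v"
      using layer_antichain[OF p_layer] comate_pt 4(1,2) by metis
    then have "u = v" using mate_comate_pt 4(1,2) by metis
    then show ?thesis using leq_refl 4(1) layers_subset by auto
  qed
qed

lemma lifted_disjoint:
  assumes ij: "i < width P leq" "j < width P leq" "i \<noteq> j"
  shows "lifted i \<inter> lifted j = {}"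
proof (rule ccontr)
  assume "lifted i \<inter> lifted j \<noteq> {}"
  then obtain u where u: "u \<in> lifted i" "u \<in> lifted j" by blast
  have not_t: "u \<notin> A t" if "l < width P leq" "u \<in> C l" for l
    using F_prev_vertex(1) C_vertex that by blast
  have "u \<in> C i \<and> u \<in> C j \<or> comate Mpt u \<in> C i \<and> comate Mpt u \<in> C j"
    using u not_t[OF ij(1)] not_t[OF ij(2)] unfolding lifted_def by blast
  then show False using disjoint_C[OF ij(1,2)] ij(3) by blast
qed

lemma lifted_vertices: "(\<Union>i<width P leq. lifted i) = node_vertices F"
proof
  show "(\<Union>i<width P leq. lifted i) \<subseteq> node_vertices F" unfolding lifted_def by blast
  show "node_vertices F \<subseteq> (\<Union>i<width P leq. lifted i)"
  proof
    fix u assume u: "u \<in> node_vertices F"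
    show "u \<in> (\<Union>i<width P leq. lifted i)"
    proof (cases "u \<in> A t")
      case True
      then have "comate Mpt u \<in> node_vertices F_prev"
        using vertex_t_root[OF True u] root_in_F_prev unfolding node_vertices_def by blast
      then obtain i where "i < width P leq" "comate Mpt u \<in> C i" using vertices_C by blast
      then show ?thesis using True u unfolding lifted_def by blast
    next
      case False
      then obtain i where "i < width P leq" "u \<in> C i" using vertex_prev[OF u] vertices_C by blast
      then show ?thesis using u unfolding lifted_def by blast
    qed
  qed
qed

lemma lifted_matched:
  assumes N: "N \<in> F" and e: "(a, b) \<in> M N"
  shows "\<exists>i<width P leq. a \<in> lifted i \<and> b \<in> lifted i"
proof -
  have pmN: "perfect_matching leq (fst N) (snd N) (M N)" using F_matched N by blast
  have ab: "a \<in> node_vertices F" "b \<in> node_vertices F"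
    using perfect_matching_edgeD[OF pmN e] N unfolding node_vertices_def by blast+
  consider "\<not> new_node N" | "bip_node leq (A p) (A t) N" | "bip_node leq (A t) (A s) N"
    unfolding new_node_def by blast
  then show ?thesis
  proof cases
    case 1
    then have "N \<in> F_prev" "M_prev N = M N" using N unfolding F_prev_def M_prev_def by auto
    then show ?thesis using matched_C e ab unfolding lifted_def by fastforce
  next
    case 2
    then have "(a, b) \<in> Mpt" using Mpt_extends N e by blast
    then have a: "a \<in> A p" "b \<in> A t" "comate Mpt b = a"
      using perfect_matching_edgeD[OF matching_pt] perfect_matching_comate_eq[OF matching_pt] by blast+
    then have "a \<in> node_vertices F_prev" using vertex_prev ab(1) disjoint_pt by blast
    then obtain i where "i < width P leq" "a \<in> C i" using vertices_C by blast
    then show ?thesis using a ab unfolding lifted_def by auto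
  next
    case 3
    then have "(a, b) \<in> Mts" using Mts_extends N e by blast
    then have a: "a \<in> A t" "mate Mts a = b"
      using perfect_matching_edgeD[OF matching_ts] perfect_matching_mate_eq[OF matching_ts] by blast+
    obtain i where i: "i < width P leq" "comate Mpt a \<in> C i" "mate Mps (comate Mpt a) \<in> C i"
      using root_chain[OF vertex_t_root[OF a(1) ab(1)]] by blast
    then have "b \<in> C i" using mate_ps_eq[OF a(1)] a(2) by simp
    then show ?thesis using i a(1) ab unfolding lifted_def by blast
  qed
qed

lemma lifted_partition: "matched_chain_partition P leq (width P leq) F M lifted"
  unfolding matched_chain_partition_def
  using lifted_chain lifted_disjoint lifted_vertices lifted_matched by blast

end

subsection \<open>Induction over the stages\<close>

context regular_layers
begin

lemma matched_chain_partition_stage_2: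
  assumes F: "F \<subseteq> Collect (node_at 2)" and matched: "\<forall>N\<in>F. perfect_matching leq (fst N) (snd N) (M N)"
  shows "\<exists>C. matched_chain_partition P leq (width P leq) F M C"
proof (cases "F = {}")
  case True
  then show ?thesis using matched_chain_partition_empty by blast
next
  case False
  then have F: "F = {(A 1, A 2)}" using F node_at_2 by blast
  show ?thesis unfolding F
  proof (rule matched_chain_partition_single)
    show "perfect_matching leq (A 1) (A 2) (M (A 1, A 2))" using matched F by simp
    show "finite (A 1)" "card (A 1) = width P leq" using finite_layer card_layer one_in_range by blast+
    show "A 1 \<inter> A 2 = {}" "A 1 \<union> A 2 \<subseteq> P"
      using layers_disjoint layer_subset one_in_range two_in_range by auto
  qed (fact leq_refl)
qed

lemma matched_chain_partition_at:
  assumes "2 \<le> t" "t \<le> k" "F \<subseteq> Collect (node_at t)"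
    and "\<forall>G\<in>F. \<forall>N\<in>F. (G, N) \<notin> (child_at t)\<^sup>+"
    and "\<forall>N\<in>F. perfect_matching leq (fst N) (snd N) (M N)"
  shows "\<exists>C. matched_chain_partition P leq (width P leq) F M C"
  using assms
proof (induction t arbitrary: F M rule: nat_induct_at_least)
  case base
  then show ?case using matched_chain_partition_stage_2 by blast
next
  case (Suc n)
  then have stage: "Suc n \<in> {3..k}" by auto
  obtain p s where ps: "consecutive P leq A n p s" "sqlt P leq (A p) (A (Suc n))"
    "sqlt P leq (A (Suc n)) (A s)"
    using insertion_point[OF stage] by auto
  interpret insertion P leq A k "Suc n" p s
    using stage ps by unfold_locales auto
  have matched: "\<And>G. G \<in> F \<Longrightarrow> perfect_matching leq (fst G) (snd G) (M G)"
    using Suc.prems(4) by blast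
  obtain Mpt where Mpt: "perfect_matching leq (A p) (A (Suc n)) Mpt"
    "\<forall>G\<in>F. bip_node leq (A p) (A (Suc n)) G \<longrightarrow> M G \<subseteq> Mpt"
    using consecutive_matching_extending[where F = F and M = M, OF _ consecutive_pt matched] stage
    by auto
  obtain Mts where Mts: "perfect_matching leq (A (Suc n)) (A s) Mts"
    "\<forall>G\<in>F. bip_node leq (A (Suc n)) (A s) G \<longrightarrow> M G \<subseteq> Mts"
    using consecutive_matching_extending[where F = F and M = M, OF _ consecutive_ts matched] stage
    by auto
  interpret insertion_step P leq A k "Suc n" p s Mpt Mts F M
    by unfold_locales (use Mpt Mts Suc.prems in auto)
  have "n \<le> k" using Suc.prems(1) by simp
  then have "\<exists>C. matched_chain_partition P leq (width P leq) F_prev M_prev C"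
    using Suc.IH F_prev_nodes F_prev_ancestor_free F_prev_matched by simp
  then obtain C where "matched_chain_partition P leq (width P leq) F_prev M_prev C" ..
  then interpret chain_lifting P leq A k "Suc n" p s Mpt Mts F M C
    by unfold_locales
  show ?case using lifted_partition by blast
qed

end

theorem proposition11:
  fixes P :: "'a set" and leq :: "'a \<Rightarrow> 'a \<Rightarrow> bool" and A :: "nat \<Rightarrow> 'a set" and k w :: nat
    and \<F> :: "('a set \<times> 'a set) set" and M :: "'a set \<times> 'a set \<Rightarrow> ('a \<times> 'a) set"
  assumes reg: "regular_poset P leq A k"
    and w: "w = width P leq"
    and af: "ancestor_free P leq A k \<F>"
    and match: "\<forall>N\<in>\<F>. perfect_matching leq (fst N) (snd N) (M N)"
  shows "\<exists>C :: nat \<Rightarrow> 'a set.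
           (\<forall>i<w. chain P leq (C i)) \<and>
           (\<forall>i<w. \<forall>j<w. i \<noteq> j \<longrightarrow> C i \<inter> C j = {}) \<and>
           (\<Union>i<w. C i) = (\<Union>N\<in>\<F>. fst N \<union> snd N) \<and>
           (\<forall>N\<in>\<F>. \<forall>(a, b)\<in>M N. \<exists>i<w. a \<in> C i \<and> b \<in> C i)"
proof -
  have "\<exists>C. matched_chain_partition P leq w \<F> M C"
  proof (cases "\<F> = {}")
    case True
    then show ?thesis using matched_chain_partition_empty by blast
  next
    case False
    then obtain t p s where "consecutive P leq A t p s" "t \<le> k"
      using af unfolding ancestor_free_def nodes_def is_node_def by fastforce
    then interpret regular_layers P leq A k
      using reg regular_poset_width_pos by unfold_locales
    show ?thesis
      using matched_chain_partition_at[OF two_le_k order_refl] af match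
      unfolding w ancestor_free_def nodes_def node_descendant_def is_node_iff_node_at
        node_child_eq_child_at by blast
  qed
  then show ?thesis unfolding matched_chain_partition_def node_vertices_def .
qed

end
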